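(* Let $A$ be a Jordan algebra with unit over a field of characteristic $0$. The map $\Phi$, which sends a representation $\rho$ of $L(A)$ on $V$ to the generalized representation $(\rho|_{U_{-1}},-\rho(\bar A))$ of $A$ on $V$, induces a one-to-one correspondence between (equivalence classes of) finite-dimensional irreducible representations of the Lie algebra $L(A)$ and (equivalence classes of) finite-dimensional irreducible generalized representations of $A$.
   Context: Jordan algebra: commutative algebra with product $*$ satisfying $(x^2*y)*x=x^2*(y*x)$. $L(A)=U_{-1}\oplus U_0\oplus U_1$ is the Lie algebra built as follows: $\mathcal U$ = underlying space of $A$, $L_a(x)=a*x$, bilinear maps $\bar A(x,y)=x*y$, $A_a(x,y)=(x*a)*y+(y*a)*x-a*(x*y)$; $U_{-1}=\mathcal U$, $U_0=\mathrm{span}\{L_a,[L_a,L_b]\}\subset\mathrm{End}\,\mathcal U$, $U_1=\mathrm{span}\{\bar A,A_a\}$; skew-symmetric bracket $[a,b]=0$ on $U_{-1}$, $[B_1,B_2]=0$ on $U_1$, $[S,a]=S(a)$, $[S_1,S_2]=S_1S_2-S_2S_1$, $[B,a]=(y\mapsto B(a,y))$, $[S,B]=((x,y)\mapsto S(B(x,y))-B(Sx,y)-B(x,Sy))$ (so $[[\bar A,x],y]=x*y$). For $a\in\mathrm{End}\,V$, $x*_ay=[[x,a],y]=xay+yax-axy-yxa$. A generalized representation of $A$ (unit $e$) in $V$ is a pair $(\pi,a)$, $a\in\mathrm{End}\,V$, $\pi:A\to\mathrm{End}\,V$ linear, with $\pi(x*y)=\pi(x)*_a\pi(y)$ and $[a,[\pi(e),a]]=a$.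 It is irreducible if $V\neq0$ and there is no subspace $0\ne W\ne V$ invariant under $a$ and all $\pi(x)$. Two generalized representations $(\pi,a)$ on $V$ and $(\nu,b)$ on $W$ are equivalent if there is a linear isomorphism $f:V\to W$ with $f\pi(x)=\nu(x)f$ for all $x\in A$ and $fa=bf$. Equivalence of Lie algebra representations is the usual one. *)

theory Defs
  imports "HOL-Library.Function_Algebras" "Jordan_Normal_Form.Matrix"
begin

definition jordan_algebra_with_unit ::
  "('k::field \<Rightarrow> 'a::ab_group_add \<Rightarrow> 'a) \<Rightarrow> ('a \<Rightarrow> 'a \<Rightarrow> 'a) \<Rightarrow> 'a \<Rightarrow> bool" where
  "jordan_algebra_with_unit sA m e \<longleftrightarrow>
     vector_space sA \<and>
     (\<forall>x y z. m (x + y) z = m x z + m y z) \<and>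
     (\<forall>c x y. m (sA c x) y = sA c (m x y)) \<and>
     (\<forall>x y. m x y = m y x) \<and>
     (\<forall>x y. m (m (m x x) y) x = m (m x x) (m y x)) \<and>
     (\<forall>x. m e x = x)"

inductive_set lspan :: "('k \<Rightarrow> 'b::ab_group_add \<Rightarrow> 'b) \<Rightarrow> 'b set \<Rightarrow> 'b set"
  for sc :: "'k \<Rightarrow> 'b \<Rightarrow> 'b" and S :: "'b set" where
  lspan_zero: "0 \<in> lspan sc S"
| lspan_base: "x \<in> S \<Longrightarrow> x \<in> lspan sc S"
| lspan_add: "x \<in> lspan sc S \<Longrightarrow> y \<in> lspan sc S \<Longrightarrow> x + y \<in> lspan sc S"
| lspan_scale: "x \<in> lspan sc S \<Longrightarrow> sc c x \<in> lspan sc S"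

text \<open>Elements of L(A) are triples (u, S, B) with u in U_{-1} = A,
  S in U_0 (endomorphisms of A) and B in U_1 (bilinear maps A x A -> A).\<close>

type_synonym 'a LAel = "'a \<times> ('a \<Rightarrow> 'a) \<times> ('a \<Rightarrow> 'a \<Rightarrow> 'a)"

definition Lop :: "('a \<Rightarrow> 'a \<Rightarrow> 'a) \<Rightarrow> 'a \<Rightarrow> ('a \<Rightarrow> 'a)" where
  "Lop m a = (\<lambda>x. m a x)"

definition Abar :: "('a \<Rightarrow> 'a \<Rightarrow> 'a) \<Rightarrow> ('a \<Rightarrow> 'a \<Rightarrow> 'a)" where
  "Abar m = (\<lambda>x y. m x y)"

definition Aop :: "('a::ab_group_add \<Rightarrow> 'a \<Rightarrow> 'a) \<Rightarrow> 'a \<Rightarrow> ('a \<Rightarrow> 'a \<Rightarrow> 'a)" where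
  "Aop m a = (\<lambda>x y. m (m x a) y + m (m y a) x - m a (m x y))"

definition U0 :: "('k \<Rightarrow> 'a::ab_group_add \<Rightarrow> 'a) \<Rightarrow> ('a \<Rightarrow> 'a \<Rightarrow> 'a) \<Rightarrow> ('a \<Rightarrow> 'a) set" where
  "U0 sA m = lspan (\<lambda>c f. (\<lambda>x. sA c (f x)))
      (range (Lop m) \<union> {(\<lambda>x. Lop m a (Lop m b x) - Lop m b (Lop m a x)) | a b. True})"

definition U1 :: "('k \<Rightarrow> 'a::ab_group_add \<Rightarrow> 'a) \<Rightarrow> ('a \<Rightarrow> 'a \<Rightarrow> 'a) \<Rightarrow> ('a \<Rightarrow> 'a \<Rightarrow> 'a) set" where
  "U1 sA m = lspan (\<lambda>c B. (\<lambda>x y. sA c (B x y))) ({Abar m} \<union> range (Aop m))"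

definition LA :: "('k \<Rightarrow> 'a::ab_group_add \<Rightarrow> 'a) \<Rightarrow> ('a \<Rightarrow> 'a \<Rightarrow> 'a) \<Rightarrow> 'a LAel set" where
  "LA sA m = {(u, S, B). S \<in> U0 sA m \<and> B \<in> U1 sA m}"

definition la_add :: "'a::ab_group_add LAel \<Rightarrow> 'a LAel \<Rightarrow> 'a LAel" where
  "la_add X Y = (case X of (u1, S1, B1) \<Rightarrow> case Y of (u2, S2, B2) \<Rightarrow>
      (u1 + u2, (\<lambda>x. S1 x + S2 x), (\<lambda>x y. B1 x y + B2 x y)))"

definition la_scale :: "('k \<Rightarrow> 'a \<Rightarrow> 'a) \<Rightarrow> 'k \<Rightarrow> 'a LAel \<Rightarrow> 'a LAel" where
  "la_scale sA c X = (case X of (u, S, B) \<Rightarrow>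
      (sA c u, (\<lambda>x. sA c (S x)), (\<lambda>x y. sA c (B x y))))"

text \<open>The bracket, extended bilinearly from: [a,b]=0 on U_{-1}, [B1,B2]=0 on U_1,
  [S,a]=S a, [S1,S2]=S1 S2 - S2 S1, [B,a]=(y \<mapsto> B(a,y)),
  [S,B]=((x,y) \<mapsto> S(B(x,y)) - B(Sx,y) - B(x,Sy)), skew-symmetric.\<close>

definition la_bracket :: "'a::ab_group_add LAel \<Rightarrow> 'a LAel \<Rightarrow> 'a LAel" where
  "la_bracket X Y = (case X of (u1, S1, B1) \<Rightarrow> case Y of (u2, S2, B2) \<Rightarrow>
      (S1 u2 - S2 u1,
       (\<lambda>y. S1 (S2 y) - S2 (S1 y) + B1 u2 y - B2 u1 y),
       (\<lambda>x y. (S1 (B2 x y) - B2 (S1 x) y - B2 x (S1 y))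
            - (S2 (B1 x y) - B1 (S2 x) y - B1 x (S2 y)))))"

text \<open>Finite-dimensional spaces V are identified with k^n (n = dim V); End V with
  n x n matrices.  An invariant subspace for a family of matrices.\<close>

definition subspace_vec :: "nat \<Rightarrow> 'k::field vec set \<Rightarrow> bool" where
  "subspace_vec n W \<longleftrightarrow> W \<subseteq> carrier_vec n \<and> 0\<^sub>v n \<in> W \<and>
     (\<forall>v\<in>W. \<forall>w\<in>W. v + w \<in> W) \<and> (\<forall>c. \<forall>v\<in>W. c \<cdot>\<^sub>v v \<in> W)"

definition irreducible_family :: "nat \<Rightarrow> 'k::field mat set \<Rightarrow> bool" where
  "irreducible_family n F \<longleftrightarrow> n > 0 \<and>
     \<not> (\<exists>W. subspace_vec n W \<and> W \<noteq> {0\<^sub>v n} \<and> W \<noteq> carrier_vec n \<and>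
            (\<forall>M\<in>F. \<forall>w\<in>W. M *\<^sub>v w \<in> W))"

definition lie_rep ::
  "('k::field \<Rightarrow> 'a::ab_group_add \<Rightarrow> 'a) \<Rightarrow> ('a \<Rightarrow> 'a \<Rightarrow> 'a) \<Rightarrow> nat \<Rightarrow> ('a LAel \<Rightarrow> 'k mat) \<Rightarrow> bool" where
  "lie_rep sA m n \<rho> \<longleftrightarrow>
     (\<forall>X\<in>LA sA m. \<rho> X \<in> carrier_mat n n) \<and>
     (\<forall>X\<in>LA sA m. \<forall>Y\<in>LA sA m. \<rho> (la_add X Y) = \<rho> X + \<rho> Y) \<and>
     (\<forall>c. \<forall>X\<in>LA sA m. \<rho> (la_scale sA c X) = c \<cdot>\<^sub>m \<rho> X) \<and>
     (\<forall>X\<in>LA sA m. \<forall>Y\<in>LA sA m. \<rho> (la_bracket X Y) = \<rho> X * \<rho> Y - \<rho> Y * \<rho> X)"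

definition irreducible_lie_rep ::
  "('k::field \<Rightarrow> 'a::ab_group_add \<Rightarrow> 'a) \<Rightarrow> ('a \<Rightarrow> 'a \<Rightarrow> 'a) \<Rightarrow> nat \<Rightarrow> ('a LAel \<Rightarrow> 'k mat) \<Rightarrow> bool" where
  "irreducible_lie_rep sA m n \<rho> \<longleftrightarrow> lie_rep sA m n \<rho> \<and> irreducible_family n (\<rho> ` LA sA m)"

definition lie_rep_equiv ::
  "('k::field \<Rightarrow> 'a::ab_group_add \<Rightarrow> 'a) \<Rightarrow> ('a \<Rightarrow> 'a \<Rightarrow> 'a) \<Rightarrow>
   nat \<Rightarrow> ('a LAel \<Rightarrow> 'k mat) \<Rightarrow> nat \<Rightarrow> ('a LAel \<Rightarrow> 'k mat) \<Rightarrow> bool" where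
  "lie_rep_equiv sA m n \<rho> n' \<rho>' \<longleftrightarrow> n = n' \<and>
     (\<exists>P\<in>carrier_mat n n. invertible_mat P \<and> (\<forall>X\<in>LA sA m. P * \<rho> X = \<rho>' X * P))"

definition jprod_a :: "'k::field mat \<Rightarrow> 'k mat \<Rightarrow> 'k mat \<Rightarrow> 'k mat" where
  "jprod_a a x y = x * a * y + y * a * x - a * x * y - y * x * a"

definition mcomm :: "'k::field mat \<Rightarrow> 'k mat \<Rightarrow> 'k mat" where
  "mcomm x y = x * y - y * x"

definition gen_rep ::
  "('k::field \<Rightarrow> 'a::ab_group_add \<Rightarrow> 'a) \<Rightarrow> ('a \<Rightarrow> 'a \<Rightarrow> 'a) \<Rightarrow> 'a \<Rightarrow> nat \<Rightarrow>
   ('a \<Rightarrow> 'k mat) \<Rightarrow> 'k mat \<Rightarrow> bool" where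
  "gen_rep sA m e n \<pi> a \<longleftrightarrow>
     a \<in> carrier_mat n n \<and> (\<forall>x. \<pi> x \<in> carrier_mat n n) \<and>
     (\<forall>x y. \<pi> (x + y) = \<pi> x + \<pi> y) \<and> (\<forall>c x. \<pi> (sA c x) = c \<cdot>\<^sub>m \<pi> x) \<and>
     (\<forall>x y. \<pi> (m x y) = jprod_a a (\<pi> x) (\<pi> y)) \<and>
     mcomm a (mcomm (\<pi> e) a) = a"

definition irreducible_gen_rep ::
  "('k::field \<Rightarrow> 'a::ab_group_add \<Rightarrow> 'a) \<Rightarrow> ('a \<Rightarrow> 'a \<Rightarrow> 'a) \<Rightarrow> 'a \<Rightarrow> nat \<Rightarrow>
   ('a \<Rightarrow> 'k mat) \<Rightarrow> 'k mat \<Rightarrow> bool" where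
  "irreducible_gen_rep sA m e n \<pi> a \<longleftrightarrow>
     gen_rep sA m e n \<pi> a \<and> irreducible_family n (insert a (range \<pi>))"

definition gen_rep_equiv ::
  "nat \<Rightarrow> ('a \<Rightarrow> 'k::field mat) \<Rightarrow> 'k mat \<Rightarrow> nat \<Rightarrow> ('a \<Rightarrow> 'k mat) \<Rightarrow> 'k mat \<Rightarrow> bool" where
  "gen_rep_equiv n \<pi> a n' \<nu> b \<longleftrightarrow> n = n' \<and>
     (\<exists>P\<in>carrier_mat n n. invertible_mat P \<and> (\<forall>x. P * \<pi> x = \<nu> x * P) \<and> P * a = b * P)"

definition Phi_pi :: "('a::ab_group_add \<Rightarrow> 'a \<Rightarrow> 'a) \<Rightarrow> ('a LAel \<Rightarrow> 'k::field mat) \<Rightarrow> 'a \<Rightarrow> 'k mat" where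
  "Phi_pi m \<rho> = (\<lambda>x. \<rho> (x, (\<lambda>_. 0), (\<lambda>_ _. 0)))"

definition Phi_a :: "('a::ab_group_add \<Rightarrow> 'a \<Rightarrow> 'a) \<Rightarrow> ('a LAel \<Rightarrow> 'k::field mat) \<Rightarrow> 'k mat" where
  "Phi_a m \<rho> = - \<rho> (0, (\<lambda>_. 0), Abar m)"

end

theory Submission
  imports Defs "Jordan_Normal_Form.Determinant"
begin

text \<open>The brackets \<open>[Abar, x] = L\<^sub>x\<close>, \<open>[L\<^sub>x, y] = x * y\<close> and \<open>[Abar, [e, Abar]] = -Abar\<close> in \<open>L(A)\<close>
  turn a representation \<open>\<rho>\<close> into the identities defining a generalized representation
  \<open>\<Phi>(\<rho>)\<close>; since \<open>L(A)\<close> is generated by \<open>U\<^sub>-\<^sub>1\<close> and \<open>Abar\<close>, \<open>\<Phi>\<close> preserves irreducibility and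
  reflects equivalence.

  Conversely, for a generalized representation \<open>(\<pi>, a)\<close> the matrices \<open>\<pi>(e)\<close> and \<open>a\<close> generate an
  \<open>sl\<^sub>2\<close>-triple, which grades the Lie algebra of matrices generated by \<open>\<pi>(A)\<close> and \<open>a\<close>. In finite
  dimension the adjoint action has no highest weight vector of negative weight. This yields
  the relations \<open>[U\<^sub>-\<^sub>1, U\<^sub>-\<^sub>1] = 0\<close> and \<open>[U\<^sub>1, U\<^sub>1] = 0\<close>, and shows that an element of degree \<open>-1\<close> or
  \<open>0\<close> is determined by its brackets with \<open>\<pi>(A)\<close>; in degree \<open>0\<close> this also needs irreducibility,
  Schur's lemma and a trace argument in characteristic \<open>0\<close>. So the elements of \<open>U\<^sub>0\<close> and \<open>U\<^sub>1\<close>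
  have well-defined images, and these assemble to a representation \<open>\<rho>\<close> with \<open>\<Phi>(\<rho>) = (\<pi>, a)\<close>.\<close>

section \<open>Commutators of square matrices\<close>

text \<open>On \<open>n \<times> n\<close> matrices, equations are transferred to the function ring
  \<open>nat \<times> nat \<Rightarrow> 'k\<close>, where \<open>algebra_simps\<close> can normalise them once all products
  have been expanded by the distributivity laws.\<close>

definition mat_entries :: "nat \<Rightarrow> 'k::field mat \<Rightarrow> nat \<times> nat \<Rightarrow> 'k" where
  "mat_entries n M = (\<lambda>(i, j). if i < n \<and> j < n then M $$ (i, j) else 0)"

lemma mat_eq_iff_entries_eq:
  assumes "M \<in> carrier_mat n n" "N \<in> carrier_mat n n"
  shows "M = N \<longleftrightarrow> mat_entries n M = mat_entries n N"
proof
  assume entries: "mat_entries n M = mat_entries n N"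
  show "M = N"
  proof (rule eq_matI)
    fix i j assume "i < dim_row N" "j < dim_col N"
    with assms fun_cong[OF entries, of "(i, j)"] show "M $$ (i, j) = N $$ (i, j)"
      by (simp add: mat_entries_def)
  qed (use assms in auto)
qed simp

lemma mat_entries_add [simp]:
  "M \<in> carrier_mat n n \<Longrightarrow> N \<in> carrier_mat n n \<Longrightarrow> mat_entries n (M + N) = mat_entries n M + mat_entries n N"
  and mat_entries_diff [simp]:
  "M \<in> carrier_mat n n \<Longrightarrow> N \<in> carrier_mat n n \<Longrightarrow> mat_entries n (M - N) = mat_entries n M - mat_entries n N"
  and mat_entries_uminus [simp]: "M \<in> carrier_mat n n \<Longrightarrow> mat_entries n (- M) = - mat_entries n M"
  and mat_entries_smult [simp]:
  "M \<in> carrier_mat n n \<Longrightarrow> mat_entries n (c \<cdot>\<^sub>m M) = (\<lambda>ij. c * mat_entries n M ij)"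
  and mat_entries_zero [simp]: "mat_entries n (0\<^sub>m n n) = 0"
  by (auto simp: mat_entries_def fun_eq_iff)

declare minus_carrier_mat [simp]

text \<open>The library's distributivity laws leave a dimension undetermined by the left-hand side,
  which the simplifier cannot instantiate; these square versions fix all dimensions to \<open>n\<close>.\<close>

context
  fixes n :: nat
begin

lemma square_mat_distribs:
  fixes A B C :: "'k::field mat"
  shows "A \<in> carrier_mat n n \<Longrightarrow> B \<in> carrier_mat n n \<Longrightarrow> C \<in> carrier_mat n n \<Longrightarrow> (A - B) * C = A * C - B * C"
    and "A \<in> carrier_mat n n \<Longrightarrow> B \<in> carrier_mat n n \<Longrightarrow> C \<in> carrier_mat n n \<Longrightarrow> C * (A - B) = C * A - C * B"
    and "A \<in> carrier_mat n n \<Longrightarrow> B \<in> carrier_mat n n \<Longrightarrow> C \<in> carrier_mat n n \<Longrightarrow> (A + B) * C = A * C + B * C"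
    and "A \<in> carrier_mat n n \<Longrightarrow> B \<in> carrier_mat n n \<Longrightarrow> C \<in> carrier_mat n n \<Longrightarrow> C * (A + B) = C * A + C * B"
    and "A \<in> carrier_mat n n \<Longrightarrow> B \<in> carrier_mat n n \<Longrightarrow> A * (c \<cdot>\<^sub>m B) = c \<cdot>\<^sub>m (A * B)"
    and "A \<in> carrier_mat n n \<Longrightarrow> B \<in> carrier_mat n n \<Longrightarrow> (c \<cdot>\<^sub>m A) * B = c \<cdot>\<^sub>m (A * B)"
  by (metis minus_mult_distrib_mat, metis mult_minus_distrib_mat, metis add_mult_distrib_mat,
      metis mult_add_distrib_mat, metis mult_smult_distrib, metis mult_smult_assoc_mat)

end

lemma mcomm_carrier [simp]:
  "X \<in> carrier_mat n n \<Longrightarrow> Y \<in> carrier_mat n n \<Longrightarrow> mcomm X Y \<in> carrier_mat n n"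
  by (simp add: mcomm_def)

lemma mcomm_add_left:
    "X \<in> carrier_mat n n \<Longrightarrow> Y \<in> carrier_mat n n \<Longrightarrow> Z \<in> carrier_mat n n \<Longrightarrow>
      mcomm (X + Y) Z = mcomm X Z + mcomm Y Z"
  and mcomm_add_right:
    "X \<in> carrier_mat n n \<Longrightarrow> Y \<in> carrier_mat n n \<Longrightarrow> Z \<in> carrier_mat n n \<Longrightarrow>
      mcomm Z (X + Y) = mcomm Z X + mcomm Z Y"
  and mcomm_diff_left:
    "X \<in> carrier_mat n n \<Longrightarrow> Y \<in> carrier_mat n n \<Longrightarrow> Z \<in> carrier_mat n n \<Longrightarrow>
      mcomm (X - Y) Z = mcomm X Z - mcomm Y Z"
  and mcomm_diff_right:
    "X \<in> carrier_mat n n \<Longrightarrow> Y \<in> carrier_mat n n \<Longrightarrow> Z \<in> carrier_mat n n \<Longrightarrow>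
      mcomm Z (X - Y) = mcomm Z X - mcomm Z Y"
  and mcomm_smult_left:
    "X \<in> carrier_mat n n \<Longrightarrow> Y \<in> carrier_mat n n \<Longrightarrow> mcomm (c \<cdot>\<^sub>m X) Y = c \<cdot>\<^sub>m mcomm X Y"
  and mcomm_smult_right:
    "X \<in> carrier_mat n n \<Longrightarrow> Y \<in> carrier_mat n n \<Longrightarrow> mcomm X (c \<cdot>\<^sub>m Y) = c \<cdot>\<^sub>m mcomm X Y"
  and mcomm_uminus_left:
    "X \<in> carrier_mat n n \<Longrightarrow> Y \<in> carrier_mat n n \<Longrightarrow> mcomm (- X) Y = - mcomm X Y"
  and mcomm_uminus_right:
    "X \<in> carrier_mat n n \<Longrightarrow> Y \<in> carrier_mat n n \<Longrightarrow> mcomm X (- Y) = - mcomm X Y"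
  and mcomm_antisym:
    "X \<in> carrier_mat n n \<Longrightarrow> Y \<in> carrier_mat n n \<Longrightarrow> mcomm Y X = - mcomm X Y"
  and mcomm_jacobi:
    "X \<in> carrier_mat n n \<Longrightarrow> Y \<in> carrier_mat n n \<Longrightarrow> Z \<in> carrier_mat n n \<Longrightarrow>
      mcomm X (mcomm Y Z) = mcomm (mcomm X Y) Z + mcomm Y (mcomm X Z)"
  and jprod_a_eq_mcomm:
    "X \<in> carrier_mat n n \<Longrightarrow> Y \<in> carrier_mat n n \<Longrightarrow> Z \<in> carrier_mat n n \<Longrightarrow>
      jprod_a Z X Y = mcomm (mcomm X Z) Y"
  for X Y Z :: "'k::field mat"
  by (simp_all add: mcomm_def jprod_a_def square_mat_distribs[where n=n]
      mat_eq_iff_entries_eq[of _ n] fun_eq_iff algebra_simps)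

lemma uminus_zero_mat [simp]: "- (0\<^sub>m n n :: 'k::group_add mat) = 0\<^sub>m n n"
  by (rule eq_matI) auto

lemma mcomm_self [simp]: "X \<in> carrier_mat n n \<Longrightarrow> mcomm X X = 0\<^sub>m n n"
  by (simp add: mcomm_def)

lemma mcomm_zero_left [simp]: "X \<in> carrier_mat n n \<Longrightarrow> mcomm (0\<^sub>m n n) X = 0\<^sub>m n n"
  and mcomm_zero_right [simp]: "X \<in> carrier_mat n n \<Longrightarrow> mcomm X (0\<^sub>m n n) = 0\<^sub>m n n"
  by (simp_all add: mcomm_def mat_eq_iff_entries_eq[of _ n])

lemma mcomm_eq_0_iff_commute:
  "X \<in> carrier_mat n n \<Longrightarrow> Y \<in> carrier_mat n n \<Longrightarrow> mcomm X Y = 0\<^sub>m n n \<longleftrightarrow> X * Y = Y * X"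
  by (simp add: mcomm_def mat_eq_iff_entries_eq[of _ n] fun_eq_iff)

lemma smult_mat_eq_0_iff:
  "A \<in> carrier_mat n n \<Longrightarrow> c \<cdot>\<^sub>m A = 0\<^sub>m n n \<longleftrightarrow> c = 0 \<or> A = 0\<^sub>m n n"
  for A :: "'k::field mat"
  by (auto simp: mat_eq_iff)

definition mat_trace :: "'k::comm_ring_1 mat \<Rightarrow> 'k" where
  "mat_trace A = (\<Sum>i<dim_row A. A $$ (i, i))"

lemma mat_trace_mult_comm:
  assumes A: "A \<in> carrier_mat n m" and B: "B \<in> carrier_mat m n"
  shows "mat_trace (A * B) = mat_trace (B * A)"
proof -
  have "mat_trace (A * B) = (\<Sum>i<n. \<Sum>t<m. A $$ (i, t) * B $$ (t, i))"
    unfolding mat_trace_def using A B by (auto simp: scalar_prod_def atLeast0LessThan intro!: sum.cong)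
  also have "\<dots> = (\<Sum>t<m. \<Sum>i<n. B $$ (t, i) * A $$ (i, t))"
    by (subst sum.swap) (simp add: mult.commute)
  also have "\<dots> = mat_trace (B * A)"
    unfolding mat_trace_def using A B by (auto simp: scalar_prod_def atLeast0LessThan intro!: sum.cong)
  finally show ?thesis .
qed

lemma mat_trace_add: "A \<in> carrier_mat n n \<Longrightarrow> B \<in> carrier_mat n n \<Longrightarrow> mat_trace (A + B) = mat_trace A + mat_trace B"
  and mat_trace_diff: "A \<in> carrier_mat n n \<Longrightarrow> B \<in> carrier_mat n n \<Longrightarrow> mat_trace (A - B) = mat_trace A - mat_trace B"
  and mat_trace_smult: "A \<in> carrier_mat n n \<Longrightarrow> mat_trace (c \<cdot>\<^sub>m A) = c * mat_trace A"
  and mat_trace_one: "mat_trace (1\<^sub>m n :: 'k::comm_ring_1 mat) = of_nat n"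
  by (simp_all add: mat_trace_def sum.distrib sum_subtractf sum_distrib_left)

section \<open>Eigenvectors of an inner derivation\<close>

definition mat_lincomb :: "nat \<Rightarrow> 'b set \<Rightarrow> ('b \<Rightarrow> 'k::field) \<Rightarrow> ('b \<Rightarrow> 'k mat) \<Rightarrow> 'k mat" where
  "mat_lincomb n K c Z = mat n n (\<lambda>ij. \<Sum>k\<in>K. c k * Z k $$ ij)"

lemma exists_mat_lincomb_eq_0:
  fixes Z :: "nat \<Rightarrow> 'k::field mat"
  assumes Z: "\<And>k. Z k \<in> carrier_mat n n"
  shows "\<exists>c i. i < Suc (n * n) \<and> c i \<noteq> 0 \<and> mat_lincomb n {..<Suc (n * n)} c Z = 0\<^sub>m n n"
proof -
  define N where "N = n * n"
  \<comment> \<open>Column \<open>k\<close> of \<open>M\<close> lists the entries of \<open>Z k\<close>; the extra zero row makes \<open>M\<close> square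
    and singular.\<close>
  define M :: "'k mat" where
    "M = mat (Suc N) (Suc N) (\<lambda>(i, k). if i < N then Z k $$ (i div n, i mod n) else 0)"
  have M: "M \<in> carrier_mat (Suc N) (Suc N)" unfolding M_def by simp
  have "M = mat\<^sub>r (Suc N) (Suc N) (\<lambda>i. if i = N then 0\<^sub>v (Suc N) else row M i)"
    by (rule eq_matI) (auto simp: M_def)
  then have "det M = 0"
    using det_row_0[of N "Suc N" "\<lambda>i. row M i"] M by auto
  then obtain v where v: "v \<in> carrier_vec (Suc N)" "v \<noteq> 0\<^sub>v (Suc N)" "M *\<^sub>v v = 0\<^sub>v (Suc N)"
    using det_0_iff_vec_prod_zero_field[OF M] by auto
  have "\<exists>i<Suc N. v $ i \<noteq> 0"
  proof (rule ccontr)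
    assume "\<not> ?thesis"
    then have "v = 0\<^sub>v (Suc N)" using v(1) by (intro eq_vecI) auto
    with v(2) show False by simp
  qed
  then obtain i where i: "i < Suc N" "v $ i \<noteq> 0" by blast
  have "mat_lincomb n {..<Suc N} (($) v) Z = 0\<^sub>m n n"
  proof (rule eq_matI)
    fix r s assume "r < dim_row (0\<^sub>m n n :: 'k mat)" "s < dim_col (0\<^sub>m n n :: 'k mat)"
    then have rs: "r < n" "s < n" by auto
    define l where "l = r * n + s"
    have "r * n + s < Suc r * n" using rs by simp
    moreover have "Suc r * n \<le> n * n" using rs by (intro mult_le_mono1) simp
    ultimately
    have l: "l < N" "l div n = r" "l mod n = s" unfolding l_def N_def using rs by auto
    have "(M *\<^sub>v v) $ l = 0" using v(3) l by simp
    then have "(\<Sum>k<Suc N. M $$ (l, k) * v $ k) = 0"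
      using M v(1) l by (simp add: scalar_prod_def atLeast0LessThan)
    then show "mat_lincomb n {..<Suc N} (($) v) Z $$ (r, s) = 0\<^sub>m n n $$ (r, s)"
      using rs l by (simp add: mat_lincomb_def M_def mult.commute)
  qed (simp_all add: mat_lincomb_def)
  then show ?thesis using i unfolding N_def by blast
qed

lemma mcomm_mat_lincomb:
  assumes h: "h \<in> carrier_mat n n" and Z: "\<And>k. k \<in> K \<Longrightarrow> Z k \<in> carrier_mat n n"
  shows "mcomm h (mat_lincomb n K c Z) = mat_lincomb n K c (\<lambda>k. mcomm h (Z k))"
proof (rule eq_matI)
  fix r s assume "r < dim_row (mat_lincomb n K c (\<lambda>k. mcomm h (Z k)))"
    "s < dim_col (mat_lincomb n K c (\<lambda>k. mcomm h (Z k)))"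
  then have rs: "r < n" "s < n" by (simp_all add: mat_lincomb_def)
  have "(mcomm h (Z k)) $$ (r, s) =
      (\<Sum>t<n. h $$ (r, t) * Z k $$ (t, s)) - (\<Sum>t<n. Z k $$ (r, t) * h $$ (t, s))" if "k \<in> K" for k
    using h Z[OF that] rs by (simp add: mcomm_def scalar_prod_def atLeast0LessThan)
  then have "mat_lincomb n K c (\<lambda>k. mcomm h (Z k)) $$ (r, s) =
      (\<Sum>k\<in>K. \<Sum>t<n. c k * (h $$ (r, t) * Z k $$ (t, s)))
      - (\<Sum>k\<in>K. \<Sum>t<n. c k * (Z k $$ (r, t) * h $$ (t, s)))"
    using rs by (simp add: mat_lincomb_def right_diff_distrib sum_distrib_left sum_subtractf)
  also have "\<dots> = mcomm h (mat_lincomb n K c Z) $$ (r, s)"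
    using h rs
    by (simp add: mcomm_def mat_lincomb_def scalar_prod_def atLeast0LessThan sum_distrib_left
        sum_distrib_right sum.swap[of _ K] mult_ac)
  finally show "mcomm h (mat_lincomb n K c Z) $$ (r, s) = mat_lincomb n K c (\<lambda>k. mcomm h (Z k)) $$ (r, s)"
    by simp
qed (use h in \<open>simp_all add: mcomm_def mat_lincomb_def\<close>)

lemma mat_lincomb_eq_0_shift:
  fixes Z :: "'b \<Rightarrow> 'k::field mat" and c \<mu> :: "'b \<Rightarrow> 'k"
  assumes h: "h \<in> carrier_mat n n" and Z: "\<And>k. k \<in> K \<Longrightarrow> Z k \<in> carrier_mat n n"
    and eigen: "\<And>k. k \<in> K \<Longrightarrow> mcomm h (Z k) = \<mu> k \<cdot>\<^sub>m Z k"
    and zero: "mat_lincomb n K c Z = 0\<^sub>m n n"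
  shows "mat_lincomb n K (\<lambda>k. (\<mu> k - \<nu>) * c k) Z = 0\<^sub>m n n"
proof -
  have "mcomm h (mat_lincomb n K c Z) = mat_lincomb n K c (\<lambda>k. mcomm h (Z k))"
    by (rule mcomm_mat_lincomb[OF h Z])
  then have "mat_lincomb n K c (\<lambda>k. mcomm h (Z k)) = 0\<^sub>m n n"
    using zero h by simp
  moreover have "mat_lincomb n K c (\<lambda>k. mcomm h (Z k)) = mat_lincomb n K (\<lambda>k. \<mu> k * c k) Z"
  proof (rule eq_matI)
    fix r s assume rs: "r < dim_row (mat_lincomb n K (\<lambda>k. \<mu> k * c k) Z)"
      "s < dim_col (mat_lincomb n K (\<lambda>k. \<mu> k * c k) Z)"
    have terms: "c k * mcomm h (Z k) $$ (r, s) = \<mu> k * c k * Z k $$ (r, s)" if "k \<in> K" for k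
      using Z[OF that] eigen[OF that] rs by (simp add: mat_lincomb_def)
    show "mat_lincomb n K c (\<lambda>k. mcomm h (Z k)) $$ (r, s) = mat_lincomb n K (\<lambda>k. \<mu> k * c k) Z $$ (r, s)"
      using rs by (simp add: mat_lincomb_def) (rule sum.cong[OF refl terms])
  qed (simp_all add: mat_lincomb_def)
  ultimately have mu_zero: "mat_lincomb n K (\<lambda>k. \<mu> k * c k) Z = 0\<^sub>m n n"
    by simp
  show ?thesis
  proof (rule eq_matI)
    fix r s assume "r < dim_row (0\<^sub>m n n :: 'k mat)" "s < dim_col (0\<^sub>m n n :: 'k mat)"
    then have rs: "r < n" "s < n" by auto
    have "(\<Sum>k\<in>K. \<mu> k * c k * Z k $$ (r, s)) = 0" "(\<Sum>k\<in>K. c k * Z k $$ (r, s)) = 0"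
      using arg_cong[OF mu_zero, of "\<lambda>M. M $$ (r, s)"] arg_cong[OF zero, of "\<lambda>M. M $$ (r, s)"] rs
      by (simp_all add: mat_lincomb_def)
    then have "(\<Sum>k\<in>K. \<mu> k * c k * Z k $$ (r, s)) - \<nu> * (\<Sum>k\<in>K. c k * Z k $$ (r, s)) = 0"
      by simp
    then show "mat_lincomb n K (\<lambda>k. (\<mu> k - \<nu>) * c k) Z $$ (r, s) = 0\<^sub>m n n $$ (r, s)"
      using rs by (simp add: mat_lincomb_def sum_distrib_left algebra_simps flip: sum_subtractf)
  qed (simp_all add: mat_lincomb_def)
qed

lemma mat_lincomb_eq_0_prod_shift:
  fixes Z :: "'b \<Rightarrow> 'k::field mat" and c \<mu> :: "'b \<Rightarrow> 'k"
  assumes h: "h \<in> carrier_mat n n" and Z: "\<And>k. k \<in> K \<Longrightarrow> Z k \<in> carrier_mat n n"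
    and eigen: "\<And>k. k \<in> K \<Longrightarrow> mcomm h (Z k) = \<mu> k \<cdot>\<^sub>m Z k"
    and zero: "mat_lincomb n K c Z = 0\<^sub>m n n" and J: "finite J"
  shows "mat_lincomb n K (\<lambda>k. (\<Prod>j\<in>J. \<mu> k - \<nu> j) * c k) Z = 0\<^sub>m n n"
  using J
proof (induction J rule: finite_induct)
  case empty
  then show ?case using zero by simp
next
  case (insert j J)
  then show ?case
    using mat_lincomb_eq_0_shift[OF h Z eigen insert.IH, of "\<nu> j"] by (simp add: mult.assoc)
qed

lemma mat_lincomb_single:
  assumes "finite K" "i \<in> K" "\<And>k. k \<in> K - {i} \<Longrightarrow> c k = 0"
  shows "mat_lincomb n K c Z = mat n n (\<lambda>ij. c i * Z i $$ ij)"
proof -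
  have "(\<Sum>k\<in>K. c k * Z k $$ ij) = c i * Z i $$ ij" for ij
    using assms by (subst sum.remove[of K i]) auto
  then show ?thesis by (simp add: mat_lincomb_def)
qed

lemma mcomm_eigenvectors_inj_eigenvalues_ex_zero:
  fixes h :: "'k::field mat" and Z :: "nat \<Rightarrow> 'k mat" and \<mu> :: "nat \<Rightarrow> 'k"
  assumes h: "h \<in> carrier_mat n n" and Z: "\<And>k. Z k \<in> carrier_mat n n"
    and eigen: "\<And>k. mcomm h (Z k) = \<mu> k \<cdot>\<^sub>m Z k" and inj: "inj \<mu>"
  shows "\<exists>k. Z k = 0\<^sub>m n n"
proof -
  define K where "K = {..<Suc (n * n)}"
  have "\<exists>c i. i < Suc (n * n) \<and> c i \<noteq> 0 \<and> mat_lincomb n K c Z = 0\<^sub>m n n"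
    unfolding K_def by (rule exists_mat_lincomb_eq_0[OF Z])
  then obtain c i where i: "i \<in> K" "c i \<noteq> 0" and zero: "mat_lincomb n K c Z = 0\<^sub>m n n"
    unfolding K_def lessThan_iff[symmetric] by blast
  \<comment> \<open>Multiplying the relation by \<open>\<Prod>j\<noteq>i. (\<mu> k - \<mu> j)\<close> isolates the term of \<open>Z i\<close>.\<close>
  define J where "J = K - {i}"
  have J: "finite J" "i \<notin> J" unfolding J_def K_def by auto
  have prod: "mat_lincomb n K (\<lambda>k. (\<Prod>j\<in>J. \<mu> k - \<mu> j) * c k) Z = 0\<^sub>m n n"
    by (rule mat_lincomb_eq_0_prod_shift[OF h Z eigen zero J(1)])
  define d where "d = (\<Prod>j\<in>J. \<mu> i - \<mu> j) * c i"
  have "mat_lincomb n K (\<lambda>k. (\<Prod>j\<in>J. \<mu> k - \<mu> j) * c k) Z = mat n n (\<lambda>ij. d * Z i $$ ij)"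
    unfolding d_def
  proof (rule mat_lincomb_single)
    show "finite K" "i \<in> K" using i(1) unfolding K_def by auto
    show "(\<Prod>j\<in>J. \<mu> k - \<mu> j) * c k = 0" if "k \<in> K - {i}" for k
      using that J(1) unfolding J_def by (auto simp: prod_zero_iff)
  qed
  with prod have "mat n n (\<lambda>ij. d * Z i $$ ij) = 0\<^sub>m n n" by simp
  then have entries: "d * Z i $$ (r, s) = 0" if "r < n" "s < n" for r s
    using that by (metis index_mat(1) index_zero_mat(1) case_prod_conv)
  have "d \<noteq> 0"
    using inj i(2) J unfolding d_def by (auto simp: prod_zero_iff inj_eq)
  with entries have "Z i = 0\<^sub>m n n"
    using Z[of i] by (intro eq_matI) auto
  then show ?thesis ..
qed

section \<open>A lemma on \<open>sl\<^sub>2\<close>-triples\<close>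

lemma funpow_mcomm_carrier:
  "F \<in> carrier_mat n n \<Longrightarrow> Y \<in> carrier_mat n n \<Longrightarrow> (mcomm F ^^ k) Y \<in> carrier_mat n n"
  by (induction k) simp_all

context
  fixes n p :: nat and E F Y :: "'k::field_char_0 mat"
  assumes E: "E \<in> carrier_mat n n" and F: "F \<in> carrier_mat n n" and Y: "Y \<in> carrier_mat n n"
    and hF: "mcomm (mcomm E F) F = - F" and hY: "mcomm (mcomm E F) Y = - of_nat p \<cdot>\<^sub>m Y"
begin

lemma sl2_ad_F_power_weight:
  "mcomm (mcomm E F) ((mcomm F ^^ k) Y) = - of_nat (p + k) \<cdot>\<^sub>m (mcomm F ^^ k) Y"
proof (induction k)
  case 0
  then show ?case using hY by simp
next
  case (Suc k)
  note Yk = funpow_mcomm_carrier[OF F Y, of k]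
  have "mcomm (mcomm E F) ((mcomm F ^^ Suc k) Y)
      = mcomm (mcomm (mcomm E F) F) ((mcomm F ^^ k) Y) + mcomm F (mcomm (mcomm E F) ((mcomm F ^^ k) Y))"
    using mcomm_jacobi[OF _ F Yk, of "mcomm E F"] E F by simp
  also have "\<dots> = mcomm (- F) ((mcomm F ^^ k) Y) + mcomm F (- of_nat (p + k) \<cdot>\<^sub>m (mcomm F ^^ k) Y)"
    by (simp only: hF Suc.IH)
  also have "\<dots> = - of_nat (p + Suc k) \<cdot>\<^sub>m (mcomm F ^^ Suc k) Y"
    using F Yk
    by (simp add: mcomm_uminus_left mcomm_smult_right mat_eq_iff_entries_eq[of _ n] fun_eq_iff
        algebra_simps)
  finally show ?case .
qed

lemma sl2_ad_E_ad_F_power: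
  assumes EY: "mcomm E Y = 0\<^sub>m n n"
  shows "mcomm E ((mcomm F ^^ Suc k) Y) = (- of_nat (Suc k * (2 * p + k)) / 2) \<cdot>\<^sub>m (mcomm F ^^ k) Y"
proof (induction k)
  case 0
  have "mcomm E (mcomm F Y) = mcomm (mcomm E F) Y + mcomm F (mcomm E Y)"
    by (rule mcomm_jacobi[OF E F Y])
  then show ?case using hY EY F Y by simp
next
  case (Suc k)
  note Yk = funpow_mcomm_carrier[OF F Y, of k] and YSk = funpow_mcomm_carrier[OF F Y, of "Suc k"]
  have "mcomm E ((mcomm F ^^ Suc (Suc k)) Y)
      = mcomm (mcomm E F) ((mcomm F ^^ Suc k) Y) + mcomm F (mcomm E ((mcomm F ^^ Suc k) Y))"
    using mcomm_jacobi[OF E F YSk] by simp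
  also have "\<dots> = - of_nat (p + Suc k) \<cdot>\<^sub>m (mcomm F ^^ Suc k) Y
      + mcomm F ((- of_nat (Suc k * (2 * p + k)) / 2) \<cdot>\<^sub>m (mcomm F ^^ k) Y)"
    by (simp only: sl2_ad_F_power_weight Suc.IH)
  also have "\<dots> = (- of_nat (Suc (Suc k) * (2 * p + Suc k)) / 2) \<cdot>\<^sub>m (mcomm F ^^ Suc k) Y"
    using F Yk
    by (simp add: mcomm_smult_right mat_eq_iff_entries_eq[of _ n] fun_eq_iff field_simps)
  finally show ?case .
qed

text \<open>The matrices \<open>(ad F)\<^sup>k Y\<close> are eigenvectors of \<open>ad [E, F]\<close> with the distinct eigenvalues
  \<open>-(p + k)\<close>, so one of them vanishes; as \<open>ad E\<close> maps each of them to a nonzero multiple of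
  the previous one, all of them vanish.\<close>

lemma sl2_highest_weight_vector_negative_weight_eq_0:
  assumes EY: "mcomm E Y = 0\<^sub>m n n" and p: "p > 0"
  shows "Y = 0\<^sub>m n n"
proof -
  have "\<exists>k. (mcomm F ^^ k) Y = 0\<^sub>m n n"
  proof (rule mcomm_eigenvectors_inj_eigenvalues_ex_zero[OF _ funpow_mcomm_carrier[OF F Y]])
    show "mcomm E F \<in> carrier_mat n n" using E F by simp
    show "mcomm (mcomm E F) ((mcomm F ^^ k) Y) = (- of_nat (p + k)) \<cdot>\<^sub>m (mcomm F ^^ k) Y" for k
      using sl2_ad_F_power_weight[of k] by simp
    show "inj (\<lambda>k. - of_nat (p + k) :: 'k)"
      by (rule injI) simp
  qed
  then obtain k where "(mcomm F ^^ k) Y = 0\<^sub>m n n" ..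
  moreover have "(mcomm F ^^ k) Y = 0\<^sub>m n n \<Longrightarrow> Y = 0\<^sub>m n n" for k
  proof (induction k)
    case (Suc k)
    define c :: 'k where "c = - of_nat (Suc k * (2 * p + k)) / 2"
    have "(of_nat (Suc k * (2 * p + k)) :: 'k) \<noteq> 0"
      using p by (simp only: of_nat_eq_0_iff) simp
    then have "c \<noteq> 0"
      unfolding c_def by (simp only: divide_eq_0_iff neg_equal_0_iff_equal) simp
    moreover have "c \<cdot>\<^sub>m (mcomm F ^^ k) Y = 0\<^sub>m n n"
      using sl2_ad_E_ad_F_power[OF EY, of k] Suc.prems E unfolding c_def by simp
    ultimately show ?case
      using Suc.IH smult_mat_eq_0_iff[OF funpow_mcomm_carrier[OF F Y, of k]] by blast
  qed simp
  ultimately show ?thesis by blast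
qed

end

section \<open>Invariant subspaces\<close>

lemma subspace_vec_carrier: "subspace_vec n W \<Longrightarrow> w \<in> W \<Longrightarrow> w \<in> carrier_vec n"
  by (auto simp: subspace_vec_def)

lemma subspace_vec_smult: "subspace_vec n W \<Longrightarrow> w \<in> W \<Longrightarrow> c \<cdot>\<^sub>v w \<in> W"
  and subspace_vec_add: "subspace_vec n W \<Longrightarrow> v \<in> W \<Longrightarrow> w \<in> W \<Longrightarrow> v + w \<in> W"
  by (auto simp: subspace_vec_def)

lemma subspace_vec_diff:
  assumes W: "subspace_vec n W" and v: "v \<in> W" and w: "w \<in> W"
  shows "v - w \<in> W"
proof -
  have "v + (-1) \<cdot>\<^sub>v w \<in> W" using W v w by (simp add: subspace_vec_add subspace_vec_smult)
  moreover have "v + (-1) \<cdot>\<^sub>v w = v - w"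
    using subspace_vec_carrier[OF W v] subspace_vec_carrier[OF W w] by (intro eq_vecI) auto
  ultimately show ?thesis by simp
qed

lemma smult_mult_mat_vec:
  "A \<in> carrier_mat n n \<Longrightarrow> w \<in> carrier_vec n \<Longrightarrow> (c \<cdot>\<^sub>m A) *\<^sub>v w = c \<cdot>\<^sub>v (A *\<^sub>v w)"
  for A :: "'k::field mat"
  by (intro eq_vecI) (auto simp: scalar_prod_def sum_distrib_left mult.assoc)

context
  fixes n :: nat and W :: "'k::field vec set"
  assumes W: "subspace_vec n W"
begin

lemma invariant_add:
  "M \<in> carrier_mat n n \<Longrightarrow> N \<in> carrier_mat n n \<Longrightarrow> \<forall>w\<in>W. M *\<^sub>v w \<in> W \<Longrightarrow> \<forall>w\<in>W. N *\<^sub>v w \<in> W \<Longrightarrow>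
    \<forall>w\<in>W. (M + N) *\<^sub>v w \<in> W"
  using W by (simp add: add_mult_distrib_mat_vec subspace_vec_carrier subspace_vec_add)

lemma invariant_smult:
  "M \<in> carrier_mat n n \<Longrightarrow> \<forall>w\<in>W. M *\<^sub>v w \<in> W \<Longrightarrow> \<forall>w\<in>W. (c \<cdot>\<^sub>m M) *\<^sub>v w \<in> W"
  using W by (simp add: smult_mult_mat_vec subspace_vec_carrier subspace_vec_smult)

lemma invariant_uminus:
  assumes M: "M \<in> carrier_mat n n" and M_inv: "\<forall>w\<in>W. M *\<^sub>v w \<in> W"
  shows "\<forall>w\<in>W. (- M) *\<^sub>v w \<in> W"
proof
  fix w assume w: "w \<in> W"
  have "(- M) *\<^sub>v w = (-1) \<cdot>\<^sub>v (M *\<^sub>v w)"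
    using M subspace_vec_carrier[OF W w] by (intro eq_vecI) (auto simp: scalar_prod_def sum_negf)
  then show "(- M) *\<^sub>v w \<in> W" using W M_inv w by (simp add: subspace_vec_smult)
qed

lemma invariant_mcomm:
  assumes M: "M \<in> carrier_mat n n" and N: "N \<in> carrier_mat n n"
    and M_inv: "\<forall>w\<in>W. M *\<^sub>v w \<in> W" and N_inv: "\<forall>w\<in>W. N *\<^sub>v w \<in> W"
  shows "\<forall>w\<in>W. mcomm M N *\<^sub>v w \<in> W"
proof
  fix w assume w: "w \<in> W"
  have "mcomm M N *\<^sub>v w = M *\<^sub>v (N *\<^sub>v w) - N *\<^sub>v (M *\<^sub>v w)"
    using M N subspace_vec_carrier[OF W w]
    by (simp add: mcomm_def minus_mult_distrib_mat_vec[of "M * N" n n])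
  then show "mcomm M N *\<^sub>v w \<in> W" using W M_inv N_inv w by (simp add: subspace_vec_diff)
qed

end

lemma intertwines_uminus_iff:
  fixes P A B :: "'k::field mat"
  assumes "P \<in> carrier_mat n n" "A \<in> carrier_mat n n" "B \<in> carrier_mat n n"
  shows "P * (- A) = (- B) * P \<longleftrightarrow> P * A = B * P"
proof -
  have "P * (- A) = - (P * A)" "(- B) * P = - (B * P)"
    using assms by (auto intro!: uminus_mult_right_mat uminus_mult_left_mat)
  then show ?thesis by simp
qed

lemma irreducible_family_transfer:
  assumes "irreducible_family n G"
    and "\<And>W. subspace_vec n W \<Longrightarrow> \<forall>M\<in>F. \<forall>w\<in>W. M *\<^sub>v w \<in> W \<Longrightarrow> \<forall>M\<in>G. \<forall>w\<in>W. M *\<^sub>v w \<in> W"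
  shows "irreducible_family n F"
  using assms unfolding irreducible_family_def by blast

lemma commuting_mat_zero_or_invertible:
  fixes W :: "'k::field mat"
  assumes irr: "irreducible_family n F" and W: "W \<in> carrier_mat n n"
    and F: "F \<subseteq> carrier_mat n n" and comm: "\<And>M. M \<in> F \<Longrightarrow> W * M = M * W"
  shows "W = 0\<^sub>m n n \<or> (\<exists>B \<in> carrier_mat n n. B * W = 1\<^sub>m n \<and> W * B = 1\<^sub>m n)"
proof -
  define K where "K = {v \<in> carrier_vec n. W *\<^sub>v v = 0\<^sub>v n}"
  have "subspace_vec n K"
    unfolding subspace_vec_def K_def using W
    by (auto simp: mult_add_distrib_mat_vec[of _ n n] mult_mat_vec[of _ n n])
  moreover have "\<forall>M\<in>F. \<forall>w\<in>K. M *\<^sub>v w \<in> K"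
  proof (intro ballI)
    fix M w assume M: "M \<in> F" and w: "w \<in> K"
    have M_carrier: "M \<in> carrier_mat n n" using F M by blast
    have "W *\<^sub>v (M *\<^sub>v w) = (M * W) *\<^sub>v w"
      using W M_carrier w comm[OF M] unfolding K_def by (simp flip: assoc_mult_mat_vec)
    also have "\<dots> = M *\<^sub>v 0\<^sub>v n"
      using W M_carrier w unfolding K_def by simp
    also have "\<dots> = 0\<^sub>v n"
      using M_carrier by (intro eq_vecI) (auto simp: scalar_prod_def)
    finally show "M *\<^sub>v w \<in> K"
      using M_carrier w unfolding K_def by auto
  qed
  ultimately have "K = {0\<^sub>v n} \<or> K = carrier_vec n"
    using irr unfolding irreducible_family_def by blast
  then show ?thesis
  proof
    assume K: "K = {0\<^sub>v n}"
    have "det W \<noteq> 0"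
    proof
      assume "det W = 0"
      then obtain v where "v \<in> carrier_vec n" "v \<noteq> 0\<^sub>v n" "W *\<^sub>v v = 0\<^sub>v n"
        using det_0_iff_vec_prod_zero_field[OF W] by blast
      with K show False unfolding K_def by blast
    qed
    then have "W \<in> Units (ring_mat TYPE('k) n ())" by (rule det_non_zero_imp_unit[OF W])
    then show ?thesis unfolding Units_def ring_mat_def by auto
  next
    assume K: "K = carrier_vec n"
    have "W = 0\<^sub>m n n"
    proof (rule eq_matI)
      fix i j assume ij: "i < dim_row (0\<^sub>m n n :: 'k mat)" "j < dim_col (0\<^sub>m n n :: 'k mat)"
      then have "unit_vec n j \<in> K" using K by simp
      then have "W *\<^sub>v unit_vec n j = 0\<^sub>v n" unfolding K_def by simp
      then have "(W *\<^sub>v unit_vec n j) $ i = 0" using ij by simp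
      then show "W $$ (i, j) = 0\<^sub>m n n $$ (i, j)" using ij W by simp
    qed (use W in auto)
    then show ?thesis ..
  qed
qed

section \<open>The Lie algebra \<open>L(A)\<close>\<close>

abbreviation el_Um1 :: "'a::ab_group_add \<Rightarrow> 'a LAel" where
  "el_Um1 x \<equiv> (x, \<lambda>_. 0, \<lambda>_ _. 0)"

abbreviation el_U0 :: "('a::ab_group_add \<Rightarrow> 'a) \<Rightarrow> 'a LAel" where
  "el_U0 S \<equiv> (0, S, \<lambda>_ _. 0)"

abbreviation el_U1 :: "('a::ab_group_add \<Rightarrow> 'a \<Rightarrow> 'a) \<Rightarrow> 'a LAel" where
  "el_U1 B \<equiv> (0, \<lambda>_. 0, B)"

lemma zero_in_U0: "(\<lambda>_. 0) \<in> U0 sA m"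
  using lspan.lspan_zero[of _ "range (Lop m) \<union> _"] by (simp add: U0_def zero_fun_def)

lemma zero_in_U1: "(\<lambda>_ _. 0) \<in> U1 sA m"
  using lspan.lspan_zero[of _ "{Abar m} \<union> range (Aop m)"] by (simp add: U1_def zero_fun_def)

lemma Lop_in_U0: "Lop m x \<in> U0 sA m"
  unfolding U0_def by (rule lspan.lspan_base) simp

lemma Abar_in_U1: "Abar m \<in> U1 sA m"
  unfolding U1_def by (rule lspan.lspan_base) simp

lemma LA_memI: "S \<in> U0 sA m \<Longrightarrow> B \<in> U1 sA m \<Longrightarrow> (u, S, B) \<in> LA sA m"
  by (simp add: LA_def)

lemma el_Um1_in_LA: "el_Um1 x \<in> LA sA m"
  and el_Abar_in_LA: "el_U1 (Abar m) \<in> LA sA m"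
  and el_Lop_in_LA: "el_U0 (Lop m x) \<in> LA sA m"
  by (simp_all add: LA_memI zero_in_U0 zero_in_U1 Lop_in_U0 Abar_in_U1)

lemma
  assumes "lie_rep sA m n \<rho>"
  shows lie_rep_carrier: "X \<in> LA sA m \<Longrightarrow> \<rho> X \<in> carrier_mat n n"
    and lie_rep_add: "X \<in> LA sA m \<Longrightarrow> Y \<in> LA sA m \<Longrightarrow> \<rho> (la_add X Y) = \<rho> X + \<rho> Y"
    and lie_rep_scale: "X \<in> LA sA m \<Longrightarrow> \<rho> (la_scale sA c X) = c \<cdot>\<^sub>m \<rho> X"
    and lie_rep_bracket: "X \<in> LA sA m \<Longrightarrow> Y \<in> LA sA m \<Longrightarrow> \<rho> (la_bracket X Y) = mcomm (\<rho> X) (\<rho> Y)"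
  using assms unfolding lie_rep_def mcomm_def by blast+

locale unital_jordan_algebra =
  fixes sA :: "'k::field \<Rightarrow> 'a::ab_group_add \<Rightarrow> 'a" and m :: "'a \<Rightarrow> 'a \<Rightarrow> 'a" and e :: 'a
  assumes jordan_algebra: "jordan_algebra_with_unit sA m e"
begin

lemma m_add_left: "m (x + y) z = m x z + m y z"
  and m_commute: "m x y = m y x"
  and m_unit_left: "m e x = x"
  using jordan_algebra unfolding jordan_algebra_with_unit_def by blast+

lemma scale_minus_one: "sA (-1) x = - x"
  and scale_zero_right [simp]: "sA c 0 = 0"
proof -
  interpret vector_space sA
    using jordan_algebra unfolding jordan_algebra_with_unit_def by blast
  show "sA (-1) x = - x" "sA c 0 = 0"
    by (simp_all add: scale_minus_left)
qed

lemma m_unit_right: "m x e = x"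
  by (simp add: m_commute[of x] m_unit_left)

lemma m_zero_left [simp]: "m 0 y = 0"
  using m_add_left[of 0 0 y] by simp

lemma m_zero_right [simp]: "m y 0 = 0"
  using m_commute[of y 0] by simp

lemma m_uminus_left: "m (- x) y = - m x y"
  using m_add_left[of "- x" x y] by (simp add: eq_neg_iff_add_eq_0)

lemma m_uminus_right: "m y (- x) = - m y x"
  by (simp add: m_commute[of y] m_uminus_left)

lemma la_bracket_Abar_Um1: "la_bracket (el_U1 (Abar m)) (el_Um1 x) = el_U0 (Lop m x)"
  and la_bracket_Lop_Lop: "la_bracket (el_U0 (Lop m u)) (el_U0 (Lop m v)) =
    el_U0 (\<lambda>x. Lop m u (Lop m v x) - Lop m v (Lop m u x))"
  by (simp_all add: la_bracket_def Abar_def Lop_def fun_eq_iff)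

lemma la_bracket_Abar_Lop: "la_bracket (el_U1 (Abar m)) (el_U0 (Lop m x)) = el_U1 (Aop m x)"
  by (simp add: la_bracket_def Abar_def Lop_def Aop_def fun_eq_iff m_commute[of x] algebra_simps)
    (metis m_commute)

context
  fixes P :: "'a LAel \<Rightarrow> bool"
  assumes P_Um1: "\<And>x. P (el_Um1 x)"
    and P_Abar: "P (el_U1 (Abar m))"
    and P_add: "\<And>X Y. X \<in> LA sA m \<Longrightarrow> Y \<in> LA sA m \<Longrightarrow> P X \<Longrightarrow> P Y \<Longrightarrow> P (la_add X Y)"
    and P_scale: "\<And>c X. X \<in> LA sA m \<Longrightarrow> P X \<Longrightarrow> P (la_scale sA c X)"
    and P_bracket: "\<And>X Y. X \<in> LA sA m \<Longrightarrow> Y \<in> LA sA m \<Longrightarrow> P X \<Longrightarrow> P Y \<Longrightarrow> P (la_bracket X Y)"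
begin

lemma LA_induct_Lop: "P (el_U0 (Lop m x))"
  using P_bracket[OF el_Abar_in_LA el_Um1_in_LA P_Abar P_Um1] by (simp add: la_bracket_Abar_Um1)

lemma LA_induct_U0: "S \<in> U0 sA m \<Longrightarrow> P (el_U0 S)"
  unfolding U0_def
proof (induction rule: lspan.induct)
  case lspan_zero
  then show ?case using P_Um1[of 0] by (simp add: zero_fun_def)
next
  case (lspan_base S)
  then consider x where "S = Lop m x" | u v where "S = (\<lambda>x. Lop m u (Lop m v x) - Lop m v (Lop m u x))"
    by blast
  then show ?case
  proof cases
    case (2 u v)
    then show ?thesis
      using P_bracket[OF el_Lop_in_LA el_Lop_in_LA LA_induct_Lop LA_induct_Lop]
      by (simp add: la_bracket_Lop_Lop)
  qed (simp add: LA_induct_Lop)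
next
  case (lspan_add S T)
  then have "P (la_add (el_U0 S) (el_U0 T))"
    by (intro P_add) (simp_all add: LA_memI zero_in_U1 U0_def)
  then show ?case by (simp add: la_add_def plus_fun_def)
next
  case (lspan_scale S c)
  then have "P (la_scale sA c (el_U0 S))"
    by (intro P_scale) (simp_all add: LA_memI zero_in_U1 U0_def)
  then show ?case by (simp add: la_scale_def)
qed

lemma LA_induct_U1: "B \<in> U1 sA m \<Longrightarrow> P (el_U1 B)"
  unfolding U1_def
proof (induction rule: lspan.induct)
  case lspan_zero
  then show ?case using P_Um1[of 0] by (simp add: zero_fun_def)
next
  case (lspan_base B)
  then consider "B = Abar m" | x where "B = Aop m x"
    by blast
  then show ?case
  proof cases
    case (2 x)
    then show ?thesis
      using P_bracket[OF el_Abar_in_LA el_Lop_in_LA P_Abar LA_induct_Lop]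
      by (simp add: la_bracket_Abar_Lop)
  qed (simp add: P_Abar)
next
  case (lspan_add B C)
  then have "P (la_add (el_U1 B) (el_U1 C))"
    by (intro P_add) (simp_all add: LA_memI zero_in_U0 U1_def)
  then show ?case by (simp add: la_add_def plus_fun_def)
next
  case (lspan_scale B c)
  then have "P (la_scale sA c (el_U1 B))"
    by (intro P_scale) (simp_all add: LA_memI zero_in_U0 U1_def)
  then show ?case by (simp add: la_scale_def)
qed

end

lemma LA_induct [consumes 1, case_names Um1 Abar add scale bracket]:
  assumes "X \<in> LA sA m"
    and Um1: "\<And>x. P (el_Um1 x)"
    and Abar: "P (el_U1 (Abar m))"
    and add: "\<And>X Y. X \<in> LA sA m \<Longrightarrow> Y \<in> LA sA m \<Longrightarrow> P X \<Longrightarrow> P Y \<Longrightarrow> P (la_add X Y)"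
    and scale: "\<And>c X. X \<in> LA sA m \<Longrightarrow> P X \<Longrightarrow> P (la_scale sA c X)"
    and bracket: "\<And>X Y. X \<in> LA sA m \<Longrightarrow> Y \<in> LA sA m \<Longrightarrow> P X \<Longrightarrow> P Y \<Longrightarrow> P (la_bracket X Y)"
  shows "P X"
proof -
  obtain u S B where X: "X = (u, S, B)" and S: "S \<in> U0 sA m" and B: "B \<in> U1 sA m"
    using assms(1) unfolding LA_def by auto
  note U0 = LA_induct_U0[of P, OF Um1 Abar add scale bracket S]
    and U1 = LA_induct_U1[of P, OF Um1 Abar add scale bracket B]
  have "P (la_add (el_Um1 u) (el_U0 S))"
    by (rule add[OF el_Um1_in_LA _ Um1 U0]) (simp add: LA_memI S zero_in_U1)
  then have "P (u, S, \<lambda>_ _. 0)"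
    by (simp add: la_add_def)
  then have "P (la_add (u, S, \<lambda>_ _. 0) (el_U1 B))"
    by (intro add U1) (simp_all add: LA_memI S B zero_in_U0 zero_in_U1)
  then show ?thesis
    by (simp add: X la_add_def)
qed

section \<open>From representations of \<open>L(A)\<close> to generalized representations of \<open>A\<close>\<close>

lemma la_bracket_Lop_Um1: "la_bracket (el_U0 (Lop m x)) (el_Um1 y) = el_Um1 (m x y)"
  and la_bracket_Um1_Abar: "la_bracket (el_Um1 x) (el_U1 (Abar m)) = el_U0 (\<lambda>y. sA (-1) (Lop m x y))"
  and la_bracket_Abar_neg_Lop_unit:
    "la_bracket (el_U1 (Abar m)) (el_U0 (\<lambda>y. sA (-1) (Lop m e y))) = la_scale sA (-1) (el_U1 (Abar m))"
  by (simp_all add: la_bracket_def la_scale_def Lop_def Abar_def scale_minus_one m_unit_left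
      m_uminus_left m_uminus_right fun_eq_iff)

lemma el_neg_Lop_in_LA: "el_U0 (\<lambda>y. sA (-1) (Lop m x y)) \<in> LA sA m"
proof (rule LA_memI[OF _ zero_in_U1])
  show "(\<lambda>y. sA (-1) (Lop m x y)) \<in> U0 sA m"
    unfolding U0_def by (rule lspan.lspan_scale[OF lspan.lspan_base]) simp
qed

lemma gen_rep_Phi:
  assumes \<rho>: "lie_rep sA m n \<rho>"
  shows "gen_rep sA m e n (Phi_pi m \<rho>) (Phi_a m \<rho>)"
proof -
  note carrier = lie_rep_carrier[OF \<rho>] and add = lie_rep_add[OF \<rho>]
    and scale = lie_rep_scale[OF \<rho>] and bracket = lie_rep_bracket[OF \<rho>]
  define \<pi> where "\<pi> = Phi_pi m \<rho>"
  define R where "R = \<rho> (el_U1 (Abar m))"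
  have R: "R \<in> carrier_mat n n" unfolding R_def by (rule carrier[OF el_Abar_in_LA])
  have \<pi>: "\<pi> x \<in> carrier_mat n n" for x unfolding \<pi>_def Phi_pi_def by (rule carrier[OF el_Um1_in_LA])
  have "\<pi> (x + y) = \<pi> x + \<pi> y" for x y
    using add[OF el_Um1_in_LA el_Um1_in_LA, of x y] by (simp add: \<pi>_def Phi_pi_def la_add_def)
  moreover have "\<pi> (sA c x) = c \<cdot>\<^sub>m \<pi> x" for c x
    using scale[OF el_Um1_in_LA, of c x] by (simp add: \<pi>_def Phi_pi_def la_scale_def)
  moreover have "\<pi> (m x y) = jprod_a (- R) (\<pi> x) (\<pi> y)" for x y
  proof -
    have "\<rho> (el_U0 (Lop m x)) = mcomm R (\<pi> x)"
      using bracket[OF el_Abar_in_LA el_Um1_in_LA, of x]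
      by (simp add: la_bracket_Abar_Um1 R_def \<pi>_def Phi_pi_def)
    then have "\<pi> (m x y) = mcomm (mcomm R (\<pi> x)) (\<pi> y)"
      using bracket[OF el_Lop_in_LA el_Um1_in_LA, of x y]
      by (simp add: la_bracket_Lop_Um1 \<pi>_def Phi_pi_def)
    also have "\<dots> = jprod_a (- R) (\<pi> x) (\<pi> y)"
      using R \<pi>[of x] \<pi>[of y] by (simp add: jprod_a_eq_mcomm mcomm_uminus_right mcomm_antisym[OF R \<pi>[of x]])
    finally show ?thesis .
  qed
  moreover have "mcomm (- R) (mcomm (\<pi> e) (- R)) = - R"
  proof -
    have "\<rho> (el_U0 (\<lambda>y. sA (-1) (Lop m e y))) = mcomm (\<pi> e) R"
      using bracket[OF el_Um1_in_LA el_Abar_in_LA, of e]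
      by (simp add: la_bracket_Um1_Abar R_def \<pi>_def Phi_pi_def)
    then have "mcomm R (mcomm (\<pi> e) R) = (-1) \<cdot>\<^sub>m R"
      using bracket[OF el_Abar_in_LA el_neg_Lop_in_LA, of e] scale[OF el_Abar_in_LA, of "-1"]
      by (simp add: la_bracket_Abar_neg_Lop_unit R_def)
    then show ?thesis
      using R \<pi>[of e] by (simp add: mcomm_uminus_left mcomm_uminus_right mat_eq_iff_entries_eq[of _ n]
          fun_eq_iff)
  qed
  ultimately show ?thesis
    using R \<pi> by (simp add: gen_rep_def mcomm_def \<pi>_def Phi_a_def R_def)
qed

lemma lie_rep_invariant_subspace:
  assumes \<rho>: "lie_rep sA m n \<rho>" and W: "subspace_vec n W"
    and inv: "\<forall>M\<in>insert (Phi_a m \<rho>) (range (Phi_pi m \<rho>)). \<forall>w\<in>W. M *\<^sub>v w \<in> W"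
    and X: "X \<in> LA sA m"
  shows "\<forall>w\<in>W. \<rho> X *\<^sub>v w \<in> W"
  using X
proof (induction rule: LA_induct)
  case (Um1 x)
  then show ?case using inv by (simp add: Phi_pi_def)
next
  case Abar
  have "\<forall>w\<in>W. (- Phi_a m \<rho>) *\<^sub>v w \<in> W"
    using inv lie_rep_carrier[OF \<rho> el_Abar_in_LA]
    by (intro invariant_uminus[OF W]) (simp_all add: Phi_a_def)
  then show ?case by (simp add: Phi_a_def)
next
  case (add X Y)
  then show ?case
    by (simp add: lie_rep_add[OF \<rho>] invariant_add[OF W] lie_rep_carrier[OF \<rho>])
next
  case (scale c X)
  then show ?case
    by (simp add: lie_rep_scale[OF \<rho>] invariant_smult[OF W] lie_rep_carrier[OF \<rho>])
next
  case (bracket X Y)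
  then show ?case
    by (simp add: lie_rep_bracket[OF \<rho>] invariant_mcomm[OF W] lie_rep_carrier[OF \<rho>])
qed

lemma irreducible_gen_rep_Phi:
  assumes "irreducible_lie_rep sA m n \<rho>"
  shows "irreducible_gen_rep sA m e n (Phi_pi m \<rho>) (Phi_a m \<rho>)"
proof -
  have \<rho>: "lie_rep sA m n \<rho>" and irr: "irreducible_family n (\<rho> ` LA sA m)"
    using assms unfolding irreducible_lie_rep_def by blast+
  have "irreducible_family n (insert (Phi_a m \<rho>) (range (Phi_pi m \<rho>)))"
  proof (rule irreducible_family_transfer[OF irr])
    fix W assume "subspace_vec n W" "\<forall>M\<in>insert (Phi_a m \<rho>) (range (Phi_pi m \<rho>)). \<forall>w\<in>W. M *\<^sub>v w \<in> W"
    then show "\<forall>M\<in>\<rho> ` LA sA m. \<forall>w\<in>W. M *\<^sub>v w \<in> W"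
      using lie_rep_invariant_subspace[OF \<rho>] by blast
  qed
  then show ?thesis
    unfolding irreducible_gen_rep_def using gen_rep_Phi[OF \<rho>] by blast
qed

lemma lie_rep_intertwiner:
  assumes \<rho>: "lie_rep sA m n \<rho>" and \<rho>': "lie_rep sA m n \<rho>'" and P: "P \<in> carrier_mat n n"
    and P_pi: "\<And>x. P * Phi_pi m \<rho> x = Phi_pi m \<rho>' x * P" and P_a: "P * Phi_a m \<rho> = Phi_a m \<rho>' * P"
    and X: "X \<in> LA sA m"
  shows "P * \<rho> X = \<rho>' X * P"
  using X
proof (induction rule: LA_induct)
  case (Um1 x)
  then show ?case using P_pi[of x] by (simp add: Phi_pi_def)
next
  case Abar
  then show ?case
    using P_a intertwines_uminus_iff[OF P lie_rep_carrier[OF \<rho> el_Abar_in_LA]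
        lie_rep_carrier[OF \<rho>' el_Abar_in_LA]]
    by (simp add: Phi_a_def)
next
  case (add X Y)
  then show ?case
    using P by (simp add: lie_rep_add[OF \<rho>] lie_rep_add[OF \<rho>'] lie_rep_carrier[OF \<rho>]
        lie_rep_carrier[OF \<rho>'] square_mat_distribs[where n=n])
next
  case (scale c X)
  then show ?case
    using P by (simp add: lie_rep_scale[OF \<rho>] lie_rep_scale[OF \<rho>'] lie_rep_carrier[OF \<rho>]
        lie_rep_carrier[OF \<rho>'] square_mat_distribs[where n=n])
next
  case (bracket X Y)
  note carriers = lie_rep_carrier[OF \<rho> bracket.hyps(1)] lie_rep_carrier[OF \<rho> bracket.hyps(2)]
    lie_rep_carrier[OF \<rho>' bracket.hyps(1)] lie_rep_carrier[OF \<rho>' bracket.hyps(2)]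
  have "P * \<rho> (la_bracket X Y) = P * \<rho> X * \<rho> Y - P * \<rho> Y * \<rho> X"
    using bracket.hyps carriers P
    by (simp add: lie_rep_bracket[OF \<rho>] mcomm_def square_mat_distribs[where n=n])
  also have "\<dots> = \<rho>' X * (P * \<rho> Y) - \<rho>' Y * (P * \<rho> X)"
    using bracket.IH carriers P by simp
  also have "\<dots> = \<rho>' (la_bracket X Y) * P"
    using bracket.hyps bracket.IH carriers P
    by (simp add: lie_rep_bracket[OF \<rho>'] mcomm_def square_mat_distribs[where n=n])
  finally show ?case .
qed

lemma lie_rep_equiv_iff_gen_rep_equiv_Phi:
  assumes \<rho>: "lie_rep sA m n \<rho>" and \<rho>': "lie_rep sA m n' \<rho>'"
  shows "lie_rep_equiv sA m n \<rho> n' \<rho>' \<longleftrightarrow>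
    gen_rep_equiv n (Phi_pi m \<rho>) (Phi_a m \<rho>) n' (Phi_pi m \<rho>') (Phi_a m \<rho>')"
proof
  assume "lie_rep_equiv sA m n \<rho> n' \<rho>'"
  then obtain P where n: "n = n'" and P: "P \<in> carrier_mat n n" "invertible_mat P"
    and PX: "\<And>X. X \<in> LA sA m \<Longrightarrow> P * \<rho> X = \<rho>' X * P"
    unfolding lie_rep_equiv_def by blast
  have "P * Phi_a m \<rho> = Phi_a m \<rho>' * P"
    using PX[OF el_Abar_in_LA] intertwines_uminus_iff[OF P(1) lie_rep_carrier[OF \<rho> el_Abar_in_LA]
        lie_rep_carrier[OF \<rho>' el_Abar_in_LA, folded n]]
    by (simp add: Phi_a_def)
  moreover have "P * Phi_pi m \<rho> x = Phi_pi m \<rho>' x * P" for x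
    unfolding Phi_pi_def by (rule PX[OF el_Um1_in_LA])
  ultimately show "gen_rep_equiv n (Phi_pi m \<rho>) (Phi_a m \<rho>) n' (Phi_pi m \<rho>') (Phi_a m \<rho>')"
    unfolding gen_rep_equiv_def using n P by blast
next
  assume "gen_rep_equiv n (Phi_pi m \<rho>) (Phi_a m \<rho>) n' (Phi_pi m \<rho>') (Phi_a m \<rho>')"
  then obtain P where n: "n = n'" and P: "P \<in> carrier_mat n n" "invertible_mat P"
    and P_pi: "\<And>x. P * Phi_pi m \<rho> x = Phi_pi m \<rho>' x * P" and P_a: "P * Phi_a m \<rho> = Phi_a m \<rho>' * P"
    unfolding gen_rep_equiv_def by blast
  have "P * \<rho> X = \<rho>' X * P" if "X \<in> LA sA m" for X
    using lie_rep_intertwiner[OF \<rho> \<rho>'[folded n] P(1) P_pi P_a that] .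
  then show "lie_rep_equiv sA m n \<rho> n' \<rho>'"
    unfolding lie_rep_equiv_def using n P by blast
qed

end

section \<open>From generalized representations of \<open>A\<close> to representations of \<open>L(A)\<close>\<close>

locale jordan_gen_rep = unital_jordan_algebra sA m e
  for sA :: "'k::field_char_0 \<Rightarrow> 'a::ab_group_add \<Rightarrow> 'a" and m e +
  fixes n :: nat and \<pi> :: "'a \<Rightarrow> 'k mat" and a :: "'k mat"
  assumes gen_rep: "gen_rep sA m e n \<pi> a"
begin

lemma a_carrier [simp]: "a \<in> carrier_mat n n"
  and pi_carrier [simp]: "\<pi> x \<in> carrier_mat n n"
  and pi_add: "\<pi> (x + y) = \<pi> x + \<pi> y"
  and pi_scale: "\<pi> (sA c x) = c \<cdot>\<^sub>m \<pi> x"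
  and a_relation: "mcomm a (mcomm (\<pi> e) a) = a"
  using gen_rep unfolding gen_rep_def by blast+

lemmas mcomm_linear = mcomm_add_left[where n=n] mcomm_add_right[where n=n]
  mcomm_diff_left[where n=n] mcomm_diff_right[where n=n] mcomm_smult_left[where n=n]
  mcomm_smult_right[where n=n] mcomm_uminus_left[where n=n] mcomm_uminus_right[where n=n]

lemma pi_m: "\<pi> (m x y) = mcomm (mcomm (\<pi> x) a) (\<pi> y)"
  using gen_rep jprod_a_eq_mcomm[of "\<pi> x" n "\<pi> y" a] unfolding gen_rep_def by simp

lemma pi_zero [simp]: "\<pi> 0 = 0\<^sub>m n n"
  using pi_add[of 0 0] by (simp add: mat_eq_iff_entries_eq[of _ n])

lemma pi_diff: "\<pi> (x - y) = \<pi> x - \<pi> y"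
  using pi_add[of "x - y" y] by (simp add: mat_eq_iff_entries_eq[of _ n] algebra_simps)

text \<open>\<open>h\<close> is the semisimple element of the \<open>sl\<^sub>2\<close>-triple \<open>(\<pi> e, a)\<close>; \<open>Lrep x\<close> will be the image
  of \<open>L\<^sub>x\<close>, since \<open>[Abar, x] = L\<^sub>x\<close> in \<open>L(A)\<close> and \<open>Abar\<close> is sent to \<open>-a\<close>.\<close>

definition h :: "'k mat" where "h = mcomm (\<pi> e) a"

definition Lrep :: "'a \<Rightarrow> 'k mat" where "Lrep x = mcomm (\<pi> x) a"

lemma h_carrier [simp]: "h \<in> carrier_mat n n"
  and Lrep_carrier [simp]: "Lrep x \<in> carrier_mat n n"
  by (simp_all add: h_def Lrep_def)

lemma Lrep_pi: "mcomm (Lrep x) (\<pi> y) = \<pi> (m x y)"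
  by (simp add: Lrep_def pi_m)

lemma h_pi: "mcomm h (\<pi> x) = \<pi> x"
  using Lrep_pi[of e x] by (simp add: Lrep_def h_def m_unit_left)

lemma h_a: "mcomm h a = - a"
  using a_relation mcomm_antisym[OF a_carrier h_carrier] by (simp add: h_def)

inductive graded :: "int \<Rightarrow> 'k mat \<Rightarrow> bool" where
  graded_pi: "graded 1 (\<pi> x)"
| graded_a: "graded (-1) a"
| graded_zero: "graded d (0\<^sub>m n n)"
| graded_add: "graded d X \<Longrightarrow> graded d Y \<Longrightarrow> graded d (X + Y)"
| graded_diff: "graded d X \<Longrightarrow> graded d Y \<Longrightarrow> graded d (X - Y)"
| graded_smult: "graded d X \<Longrightarrow> graded d (c \<cdot>\<^sub>m X)"
| graded_mcomm: "graded i X \<Longrightarrow> graded j Y \<Longrightarrow> graded (i + j) (mcomm X Y)"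

lemma graded_carrier: "graded d X \<Longrightarrow> X \<in> carrier_mat n n"
  by (induction rule: graded.induct) auto

lemma graded_mcomm': "graded i X \<Longrightarrow> graded j Y \<Longrightarrow> k = i + j \<Longrightarrow> graded k (mcomm X Y)"
  using graded_mcomm by blast

lemma graded_uminus:
  assumes "graded d X"
  shows "graded d (- X)"
proof -
  have "0\<^sub>m n n - X = - X"
    using graded_carrier[OF assms] by (simp add: mat_eq_iff_entries_eq[of _ n])
  then show ?thesis
    using graded_diff[OF graded_zero assms] by simp
qed

lemma graded_Lrep: "graded 0 (Lrep x)"
  unfolding Lrep_def by (rule graded_mcomm'[OF graded_pi graded_a]) simp

lemma graded_weight: "graded d X \<Longrightarrow> mcomm h X = of_int d \<cdot>\<^sub>m X"
proof (induction rule: graded.induct)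
  case (graded_pi x)
  then show ?case by (simp add: h_pi mat_eq_iff_entries_eq[of _ n])
next
  case graded_a
  then show ?case using h_a by (simp add: mat_eq_iff_entries_eq[of _ n] fun_eq_iff)
next
  case (graded_add d X Y)
  then show ?case using graded_carrier[OF graded_add.hyps(1)] graded_carrier[OF graded_add.hyps(2)]
    by (simp add: mcomm_linear mat_eq_iff_entries_eq[of _ n] fun_eq_iff algebra_simps)
next
  case (graded_diff d X Y)
  then show ?case using graded_carrier[OF graded_diff.hyps(1)] graded_carrier[OF graded_diff.hyps(2)]
    by (simp add: mcomm_linear mat_eq_iff_entries_eq[of _ n] fun_eq_iff algebra_simps)
next
  case (graded_smult d X c)
  then show ?case using graded_carrier[OF graded_smult.hyps]
    by (simp add: mcomm_linear mat_eq_iff_entries_eq[of _ n] fun_eq_iff algebra_simps)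
next
  case (graded_mcomm i X j Y)
  note X = graded_carrier[OF graded_mcomm.hyps(1)] and Y = graded_carrier[OF graded_mcomm.hyps(2)]
  have "mcomm h (mcomm X Y) = mcomm (mcomm h X) Y + mcomm X (mcomm h Y)"
    by (rule mcomm_jacobi[OF h_carrier X Y])
  also have "\<dots> = mcomm (of_int i \<cdot>\<^sub>m X) Y + mcomm X (of_int j \<cdot>\<^sub>m Y)"
    unfolding graded_mcomm.IH ..
  also have "\<dots> = of_int (i + j) \<cdot>\<^sub>m mcomm X Y"
    using X Y
    by (simp add: mcomm_linear mat_eq_iff_entries_eq[of _ n] fun_eq_iff
        algebra_simps)
  finally show ?case .
qed simp

lemma graded_0_mcomm_h: "graded 0 X \<Longrightarrow> mcomm X h = 0\<^sub>m n n"
  using graded_weight[of 0 X] graded_carrier[of 0 X] mcomm_antisym[OF h_carrier, of X]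
  by (simp add: mat_eq_iff_entries_eq[of _ n] fun_eq_iff)

lemma graded_negative_eq_0:
  assumes X: "graded d X" and d: "d < 0" and pi_e_X: "mcomm (\<pi> e) X = 0\<^sub>m n n"
  shows "X = 0\<^sub>m n n"
proof (rule sl2_highest_weight_vector_negative_weight_eq_0[OF pi_carrier a_carrier graded_carrier[OF X]])
  show "mcomm (mcomm (\<pi> e) a) a = - a"
    using h_a by (simp add: h_def)
  show "mcomm (mcomm (\<pi> e) a) X = - of_nat (nat (- d)) \<cdot>\<^sub>m X"
    using graded_weight[OF X] d by (simp add: h_def)
qed (use d pi_e_X in auto)

lemma graded_positive_eq_0:
  assumes X: "graded d X" and d: "d > 0" and a_X: "mcomm a X = 0\<^sub>m n n"
  shows "X = 0\<^sub>m n n"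
proof (rule sl2_highest_weight_vector_negative_weight_eq_0[OF a_carrier pi_carrier graded_carrier[OF X]])
  have a_pi_e: "mcomm a (\<pi> e) = - h"
    using mcomm_antisym[OF pi_carrier a_carrier] by (simp add: h_def)
  show "mcomm (mcomm a (\<pi> e)) (\<pi> e) = - \<pi> e"
    unfolding a_pi_e using h_pi by (simp add: mcomm_linear)
  show "mcomm (mcomm a (\<pi> e)) X = - of_nat (nat d) \<cdot>\<^sub>m X"
    unfolding a_pi_e using graded_weight[OF X] d graded_carrier[OF X]
    by (simp add: mcomm_linear mat_eq_iff_entries_eq[of _ n] fun_eq_iff)
qed (use d a_X in auto)

lemma pi_e_Lrep: "mcomm (\<pi> e) (Lrep x) = - \<pi> x"
  using Lrep_pi[of x e] mcomm_antisym[OF Lrep_carrier[of x] pi_carrier[of e]]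
  by (simp add: m_unit_right)

lemma pi_Lrep: "mcomm (\<pi> y) (Lrep x) = - \<pi> (m x y)"
  using Lrep_pi[of x y] mcomm_antisym[OF Lrep_carrier[of x] pi_carrier[of y]] by simp

lemma a_pi: "mcomm a (\<pi> x) = - Lrep x"
  using mcomm_antisym[OF pi_carrier a_carrier] by (simp add: Lrep_def)

lemma pi_commute: "mcomm (\<pi> x) (\<pi> y) = 0\<^sub>m n n"
proof (rule graded_positive_eq_0)
  show "graded 2 (mcomm (\<pi> x) (\<pi> y))"
    by (rule graded_mcomm'[OF graded_pi graded_pi]) simp
  have "mcomm a (mcomm (\<pi> x) (\<pi> y)) = mcomm (mcomm a (\<pi> x)) (\<pi> y) + mcomm (\<pi> x) (mcomm a (\<pi> y))"
    by (rule mcomm_jacobi[where n=n]) simp_all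
  also have "\<dots> = - \<pi> (m x y) + \<pi> (m y x)"
    unfolding a_pi by (simp add: mcomm_linear Lrep_pi pi_Lrep)
  also have "\<dots> = 0\<^sub>m n n"
    by (simp add: m_commute[of y x] mat_eq_iff_entries_eq[of _ n])
  finally show "mcomm a (mcomm (\<pi> x) (\<pi> y)) = 0\<^sub>m n n" .
qed simp

text \<open>\<open>Arep x\<close> will be the image of \<open>A\<^sub>x = [Abar, L\<^sub>x]\<close>.\<close>

definition Arep :: "'a \<Rightarrow> 'k mat" where "Arep x = mcomm (Lrep x) a"

lemma Arep_carrier [simp]: "Arep x \<in> carrier_mat n n"
  by (simp add: Arep_def)

lemma graded_Arep: "graded (-1) (Arep x)"
  unfolding Arep_def by (rule graded_mcomm'[OF graded_Lrep graded_a]) simp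

lemma Arep_pi: "mcomm (Arep x) (\<pi> u) = Lrep (m u x) + mcomm (Lrep u) (Lrep x)"
proof -
  have "mcomm (Lrep x) (mcomm a (\<pi> u)) = mcomm (Arep x) (\<pi> u) + mcomm a (mcomm (Lrep x) (\<pi> u))"
    unfolding Arep_def by (rule mcomm_jacobi[where n=n]) simp_all
  then have "mcomm (Arep x) (\<pi> u) = mcomm (Lrep x) (mcomm a (\<pi> u)) - mcomm a (mcomm (Lrep x) (\<pi> u))"
    by (simp add: mat_eq_iff_entries_eq[of _ n] algebra_simps)
  also have "\<dots> = - mcomm (Lrep x) (Lrep u) + Lrep (m x u)"
    unfolding a_pi Lrep_pi by (simp add: mcomm_linear mat_eq_iff_entries_eq[of _ n])
  also have "\<dots> = Lrep (m u x) + mcomm (Lrep u) (Lrep x)"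
    using mcomm_antisym[OF Lrep_carrier[of x] Lrep_carrier[of u]]
    by (simp add: m_commute[of x u] mat_eq_iff_entries_eq[of _ n] algebra_simps)
  finally show ?thesis .
qed

lemma pi_e_Arep: "mcomm (\<pi> e) (Arep x) = - Lrep x"
proof -
  have "mcomm (\<pi> e) (Arep x) = mcomm (mcomm (\<pi> e) (Lrep x)) a + mcomm (Lrep x) h"
    unfolding Arep_def h_def by (rule mcomm_jacobi[where n=n]) simp_all
  then show ?thesis
    using graded_0_mcomm_h[OF graded_Lrep] by (simp add: pi_e_Lrep mcomm_linear flip: Lrep_def)
qed

lemma Lrep_Lrep_a: "mcomm (mcomm (Lrep x) (Lrep y)) a = 0\<^sub>m n n"
proof (rule graded_negative_eq_0)
  show "graded (-1) (mcomm (mcomm (Lrep x) (Lrep y)) a)"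
    by (rule graded_mcomm'[OF graded_mcomm'[OF graded_Lrep graded_Lrep] graded_a]) simp_all
  have pi_e_LL: "mcomm (\<pi> e) (mcomm (Lrep x) (Lrep y)) = 0\<^sub>m n n"
  proof -
    have "mcomm (\<pi> e) (mcomm (Lrep x) (Lrep y))
        = mcomm (mcomm (\<pi> e) (Lrep x)) (Lrep y) + mcomm (Lrep x) (mcomm (\<pi> e) (Lrep y))"
      by (rule mcomm_jacobi[where n=n]) simp_all
    also have "\<dots> = \<pi> (m y x) - \<pi> (m x y)"
      by (simp add: pi_e_Lrep pi_Lrep Lrep_pi m_unit_right mcomm_linear mat_eq_iff_entries_eq[of _ n])
    also have "\<dots> = 0\<^sub>m n n"
      by (simp add: m_commute[of y x] mat_eq_iff_entries_eq[of _ n])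
    finally show ?thesis .
  qed
  have "mcomm (\<pi> e) (mcomm (mcomm (Lrep x) (Lrep y)) a)
      = mcomm (mcomm (\<pi> e) (mcomm (Lrep x) (Lrep y))) a + mcomm (mcomm (Lrep x) (Lrep y)) h"
    unfolding h_def by (rule mcomm_jacobi[where n=n]) simp_all
  then show "mcomm (\<pi> e) (mcomm (mcomm (Lrep x) (Lrep y)) a) = 0\<^sub>m n n"
    using graded_0_mcomm_h[OF graded_mcomm'[OF graded_Lrep graded_Lrep]] by (simp add: pi_e_LL)
qed simp

lemma a_Arep: "mcomm a (Arep x) = 0\<^sub>m n n"
proof (rule graded_negative_eq_0)
  show "graded (-2) (mcomm a (Arep x))"
    by (rule graded_mcomm'[OF graded_a graded_Arep]) simp
  have "mcomm (\<pi> e) (mcomm a (Arep x)) = mcomm h (Arep x) + mcomm a (mcomm (\<pi> e) (Arep x))"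
    unfolding h_def by (rule mcomm_jacobi[where n=n]) simp_all
  also have "\<dots> = - Arep x + mcomm (Lrep x) a"
    using graded_weight[OF graded_Arep, of x] mcomm_antisym[OF Lrep_carrier[of x] a_carrier]
    by (simp add: pi_e_Arep mcomm_linear mat_eq_iff_entries_eq[of _ n] fun_eq_iff)
  also have "\<dots> = 0\<^sub>m n n"
    by (simp add: Arep_def mat_eq_iff_entries_eq[of _ n])
  finally show "mcomm (\<pi> e) (mcomm a (Arep x)) = 0\<^sub>m n n" .
qed simp

lemma Arep_Arep: "mcomm (Arep x) (Arep y) = 0\<^sub>m n n"
proof (rule graded_negative_eq_0)
  show "graded (-2) (mcomm (Arep x) (Arep y))"
    by (rule graded_mcomm'[OF graded_Arep graded_Arep]) simp
  have "mcomm (Lrep x) (Arep y) = mcomm (Lrep y) (Arep x)"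
    using mcomm_jacobi[OF Lrep_carrier[of x] Lrep_carrier[of y] a_carrier] Lrep_Lrep_a[of x y]
    by (simp add: Arep_def)
  moreover have "mcomm (\<pi> e) (mcomm (Arep x) (Arep y))
      = mcomm (mcomm (\<pi> e) (Arep x)) (Arep y) + mcomm (Arep x) (mcomm (\<pi> e) (Arep y))"
    by (rule mcomm_jacobi[where n=n]) simp_all
  ultimately show "mcomm (\<pi> e) (mcomm (Arep x) (Arep y)) = 0\<^sub>m n n"
    using mcomm_antisym[OF Lrep_carrier[of y] Arep_carrier[of x]]
    by (simp add: pi_e_Arep mcomm_linear mat_eq_iff_entries_eq[of _ n])
qed simp

inductive U1_image :: "'k mat \<Rightarrow> bool" where
  U1_image_a: "U1_image a"
| U1_image_Arep: "U1_image (Arep x)"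
| U1_image_zero: "U1_image (0\<^sub>m n n)"
| U1_image_add: "U1_image X \<Longrightarrow> U1_image Y \<Longrightarrow> U1_image (X + Y)"
| U1_image_smult: "U1_image X \<Longrightarrow> U1_image (c \<cdot>\<^sub>m X)"
| U1_image_uminus: "U1_image X \<Longrightarrow> U1_image (- X)"

lemma U1_image_graded: "U1_image Q \<Longrightarrow> graded (-1) Q"
  by (induction rule: U1_image.induct)
    (auto intro: graded_a graded_Arep graded_zero graded_add graded_smult graded_uminus)

lemma U1_image_carrier: "U1_image Q \<Longrightarrow> Q \<in> carrier_mat n n"
  using U1_image_graded graded_carrier by blast

lemma U1_image_commute_generator:
  assumes G: "G = a \<or> (\<exists>x. G = Arep x)" and Q: "U1_image Q"
  shows "mcomm G Q = 0\<^sub>m n n"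
  using Q
proof (induction rule: U1_image.induct)
  case U1_image_a
  then show ?case using G a_Arep mcomm_antisym[OF a_carrier Arep_carrier] by auto
next
  case (U1_image_Arep x)
  then show ?case using G a_Arep Arep_Arep by auto
next
  case (U1_image_add X Y)
  then show ?case
    using G U1_image_carrier[OF U1_image_add.hyps(1)] U1_image_carrier[OF U1_image_add.hyps(2)]
    by (auto simp: mcomm_linear)
next
  case (U1_image_smult X c)
  then show ?case using G U1_image_carrier[OF U1_image_smult.hyps] by (auto simp: mcomm_linear)
next
  case (U1_image_uminus X)
  then show ?case using G U1_image_carrier[OF U1_image_uminus.hyps] by (auto simp: mcomm_linear)
qed (use G in auto)

lemma U1_image_commute: "U1_image Q1 \<Longrightarrow> U1_image Q2 \<Longrightarrow> mcomm Q1 Q2 = 0\<^sub>m n n"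
proof (induction rule: U1_image.induct)
  case (U1_image_add X Y)
  then show ?case
    using U1_image_carrier[OF U1_image_add.hyps(1)] U1_image_carrier[OF U1_image_add.hyps(2)]
      U1_image_carrier[OF U1_image_add.prems]
    by (simp add: mcomm_linear)
next
  case (U1_image_smult X c)
  then show ?case
    using U1_image_carrier[OF U1_image_smult.hyps] U1_image_carrier[OF U1_image_smult.prems]
    by (simp add: mcomm_linear)
next
  case (U1_image_uminus X)
  then show ?case
    using U1_image_carrier[OF U1_image_uminus.hyps] U1_image_carrier[OF U1_image_uminus.prems]
    by (simp add: mcomm_linear)
qed (auto intro: U1_image_commute_generator simp: U1_image_carrier)

text \<open>\<open>represents0 Z S\<close> says that \<open>Z\<close> can serve as the image of \<open>S \<in> U\<^sub>0\<close>, i.e. \<open>ad Z\<close> acts on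
  \<open>\<pi>(A)\<close> as \<open>S\<close>; likewise \<open>represents1 Q B\<close> for \<open>B \<in> U\<^sub>1\<close>, using \<open>[B, u] = B(u, -)\<close>.\<close>

definition represents0 :: "'k mat \<Rightarrow> ('a \<Rightarrow> 'a) \<Rightarrow> bool" where
  "represents0 Z S \<longleftrightarrow> graded 0 Z \<and> (\<forall>u. mcomm Z (\<pi> u) = \<pi> (S u))"

definition represents1 :: "'k mat \<Rightarrow> ('a \<Rightarrow> 'a \<Rightarrow> 'a) \<Rightarrow> bool" where
  "represents1 Q B \<longleftrightarrow> graded (-1) Q \<and> (\<forall>u. represents0 (mcomm Q (\<pi> u)) (B u))"

lemma represents0_carrier: "represents0 Z S \<Longrightarrow> Z \<in> carrier_mat n n"
  unfolding represents0_def using graded_carrier by blast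

lemma represents1_carrier: "represents1 Q B \<Longrightarrow> Q \<in> carrier_mat n n"
  unfolding represents1_def using graded_carrier by blast

lemma represents0_zero: "represents0 (0\<^sub>m n n) (\<lambda>_. 0)"
  by (simp add: represents0_def graded_zero)

lemma represents0_add:
  "represents0 Z1 S1 \<Longrightarrow> represents0 Z2 S2 \<Longrightarrow> represents0 (Z1 + Z2) (\<lambda>x. S1 x + S2 x)"
  unfolding represents0_def using graded_carrier by (auto intro: graded_add simp: mcomm_linear pi_add)

lemma represents0_diff:
  "represents0 Z1 S1 \<Longrightarrow> represents0 Z2 S2 \<Longrightarrow> represents0 (Z1 - Z2) (\<lambda>x. S1 x - S2 x)"
  unfolding represents0_def using graded_carrier by (auto intro: graded_diff simp: mcomm_linear pi_diff)

lemma represents0_scale: "represents0 Z S \<Longrightarrow> represents0 (c \<cdot>\<^sub>m Z) (\<lambda>x. sA c (S x))"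
  unfolding represents0_def using graded_carrier by (auto intro: graded_smult simp: mcomm_linear pi_scale)

lemma represents0_Lop: "represents0 (Lrep x) (Lop m x)"
  by (simp add: represents0_def Lop_def graded_Lrep Lrep_pi)

lemma represents0_mcomm:
  assumes Z1: "represents0 Z1 S1" and Z2: "represents0 Z2 S2"
  shows "represents0 (mcomm Z1 Z2) (\<lambda>y. S1 (S2 y) - S2 (S1 y))"
  unfolding represents0_def
proof
  show "graded 0 (mcomm Z1 Z2)"
    using Z1 Z2 unfolding represents0_def by (auto intro: graded_mcomm')
  note carriers = represents0_carrier[OF Z1] represents0_carrier[OF Z2]
  show "\<forall>u. mcomm (mcomm Z1 Z2) (\<pi> u) = \<pi> (S1 (S2 u) - S2 (S1 u))"
  proof
    fix u
    have "mcomm Z1 (mcomm Z2 (\<pi> u)) = mcomm (mcomm Z1 Z2) (\<pi> u) + mcomm Z2 (mcomm Z1 (\<pi> u))"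
      by (rule mcomm_jacobi[OF carriers pi_carrier])
    then have "mcomm (mcomm Z1 Z2) (\<pi> u) = mcomm Z1 (mcomm Z2 (\<pi> u)) - mcomm Z2 (mcomm Z1 (\<pi> u))"
      using carriers by (simp add: mat_eq_iff_entries_eq[of _ n] algebra_simps)
    then show "mcomm (mcomm Z1 Z2) (\<pi> u) = \<pi> (S1 (S2 u) - S2 (S1 u))"
      using Z1 Z2 by (simp add: represents0_def pi_diff)
  qed
qed

lemma exists_represents0: "S \<in> U0 sA m \<Longrightarrow> \<exists>Z. represents0 Z S"
  unfolding U0_def
proof (induction rule: lspan.induct)
  case lspan_zero
  then show ?case using represents0_zero by (auto simp: zero_fun_def)
next
  case (lspan_base S)
  then consider x where "S = Lop m x" | u v where "S = (\<lambda>y. Lop m u (Lop m v y) - Lop m v (Lop m u y))"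
    by blast
  then show ?case
    by cases (use represents0_Lop represents0_mcomm[OF represents0_Lop represents0_Lop] in blast)+
next
  case (lspan_add S T)
  then show ?case using represents0_add by (fastforce simp: plus_fun_def)
next
  case (lspan_scale S c)
  then show ?case using represents0_scale by blast
qed

lemma represents1_zero: "represents1 (0\<^sub>m n n) (\<lambda>_ _. 0)"
  by (simp add: represents1_def graded_zero represents0_zero)

lemma represents1_add:
  assumes Q1: "represents1 Q1 B1" and Q2: "represents1 Q2 B2"
  shows "represents1 (Q1 + Q2) (\<lambda>x y. B1 x y + B2 x y)"
  using Q1 Q2 represents0_add represents1_carrier[OF Q1] represents1_carrier[OF Q2]
  unfolding represents1_def by (auto intro: graded_add simp: mcomm_linear)

lemma represents1_diff:
  assumes Q1: "represents1 Q1 B1" and Q2: "represents1 Q2 B2"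
  shows "represents1 (Q1 - Q2) (\<lambda>x y. B1 x y - B2 x y)"
  using Q1 Q2 represents0_diff represents1_carrier[OF Q1] represents1_carrier[OF Q2]
  unfolding represents1_def by (auto intro: graded_diff simp: mcomm_linear)

lemma represents1_scale:
  assumes Q: "represents1 Q B"
  shows "represents1 (c \<cdot>\<^sub>m Q) (\<lambda>x y. sA c (B x y))"
  using Q represents0_scale represents1_carrier[OF Q]
  unfolding represents1_def by (auto intro: graded_smult simp: mcomm_linear)

lemma represents1_Abar: "represents1 (- a) (Abar m)"
proof -
  have "mcomm (- a) (\<pi> u) = Lrep u" for u
    using a_pi[of u] by (simp add: mcomm_linear)
  then show ?thesis
    using graded_uminus[OF graded_a] represents0_Lop by (simp add: represents1_def Abar_def Lop_def)
qed

lemma represents1_Aop: "represents1 (Arep x) (Aop m x)"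
proof -
  have "represents0 (mcomm (Arep x) (\<pi> u)) (Aop m x u)" for u
  proof -
    have "represents0 (Lrep (m u x) + mcomm (Lrep u) (Lrep x))
        (\<lambda>y. Lop m (m u x) y + (Lop m u (Lop m x y) - Lop m x (Lop m u y)))"
      by (rule represents0_add[OF represents0_Lop represents0_mcomm[OF represents0_Lop represents0_Lop]])
    moreover have "(\<lambda>y. Lop m (m u x) y + (Lop m u (Lop m x y) - Lop m x (Lop m u y))) = Aop m x u"
      by (simp add: fun_eq_iff Aop_def Lop_def m_commute[of "m _ x" u] m_commute[of _ x] algebra_simps)
        (metis m_commute)
    ultimately show ?thesis by (simp add: Arep_pi)
  qed
  then show ?thesis by (simp add: represents1_def graded_Arep)
qed

lemma represents1_mcomm:
  assumes Z: "represents0 Z S" and Q: "represents1 Q B"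
  shows "represents1 (mcomm Z Q) (\<lambda>x y. S (B x y) - B x (S y) - B (S x) y)"
  unfolding represents1_def
proof
  show "graded (-1) (mcomm Z Q)"
    using Z Q unfolding represents0_def represents1_def by (auto intro: graded_mcomm')
  note carriers = represents0_carrier[OF Z] represents1_carrier[OF Q]
  show "\<forall>v. represents0 (mcomm (mcomm Z Q) (\<pi> v)) (\<lambda>y. S (B v y) - B v (S y) - B (S v) y)"
  proof
    fix v
    have "mcomm Z (mcomm Q (\<pi> v)) = mcomm (mcomm Z Q) (\<pi> v) + mcomm Q (mcomm Z (\<pi> v))"
      by (rule mcomm_jacobi[OF carriers pi_carrier])
    also have "mcomm Z (\<pi> v) = \<pi> (S v)"
      using Z by (simp add: represents0_def)
    finally have "mcomm (mcomm Z Q) (\<pi> v) = mcomm Z (mcomm Q (\<pi> v)) - mcomm Q (\<pi> (S v))"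
      using carriers by (simp add: mat_eq_iff_entries_eq[of _ n] algebra_simps)
    moreover have "represents0 (mcomm Z (mcomm Q (\<pi> v)) - mcomm Q (\<pi> (S v)))
        (\<lambda>y. S (B v y) - B v (S y) - B (S v) y)"
      using represents0_diff[OF represents0_mcomm[OF Z]] Q unfolding represents1_def by blast
    ultimately show "represents0 (mcomm (mcomm Z Q) (\<pi> v)) (\<lambda>y. S (B v y) - B v (S y) - B (S v) y)"
      by simp
  qed
qed

lemma exists_represents1: "B \<in> U1 sA m \<Longrightarrow> \<exists>Q. represents1 Q B \<and> U1_image Q"
  unfolding U1_def
proof (induction rule: lspan.induct)
  case lspan_zero
  then show ?case using represents1_zero U1_image_zero by (auto simp: zero_fun_def)
next
  case (lspan_base B)
  then show ?case
    using represents1_Abar represents1_Aop U1_image_uminus[OF U1_image_a] U1_image_Arep by blast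
next
  case (lspan_add B C)
  then show ?case using represents1_add U1_image_add by (fastforce simp: plus_fun_def)
next
  case (lspan_scale B c)
  then show ?case using represents1_scale U1_image_smult by blast
qed

lemma graded_commute:
  assumes M: "M \<in> carrier_mat n n"
    and M_pi: "\<And>x. M * \<pi> x = \<pi> x * M" and M_a: "M * a = a * M"
    and X: "graded d X"
  shows "M * X = X * M"
proof -
  have "mcomm M X = 0\<^sub>m n n"
    using X
  proof (induction rule: graded.induct)
    case (graded_pi x)
    then show ?case using M M_pi by (simp add: mcomm_eq_0_iff_commute)
  next
    case graded_a
    then show ?case using M M_a by (simp add: mcomm_eq_0_iff_commute)
  next
    case (graded_add d X Y)
    then show ?case using M graded_carrier[OF graded_add.hyps(1)] graded_carrier[OF graded_add.hyps(2)]
      by (simp add: mcomm_linear)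
  next
    case (graded_diff d X Y)
    then show ?case using M graded_carrier[OF graded_diff.hyps(1)] graded_carrier[OF graded_diff.hyps(2)]
      by (simp add: mcomm_linear)
  next
    case (graded_smult d X c)
    then show ?case using M graded_carrier[OF graded_smult.hyps] by (simp add: mcomm_linear)
  next
    case (graded_mcomm i X j Y)
    then show ?case using M graded_carrier[OF graded_mcomm.hyps(1)] graded_carrier[OF graded_mcomm.hyps(2)]
      by (simp add: mcomm_jacobi[of M n])
  qed (use M in simp)
  then show ?thesis
    using M graded_carrier[OF X] by (simp add: mcomm_eq_0_iff_commute)
qed

text \<open>Elements of degree \<open>0\<close> are sums of commutators, since the generators have nonzero degree.\<close>

lemma graded_0_trace:
  assumes M: "M \<in> carrier_mat n n" and M_comm: "\<And>d X. graded d X \<Longrightarrow> M * X = X * M"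
  shows "graded d X \<Longrightarrow> d = 0 \<Longrightarrow> mat_trace (M * X) = 0"
proof (induction rule: graded.induct)
  case (graded_zero d)
  then show ?case using M by (simp add: mat_trace_def)
next
  case (graded_add d X Y)
  then show ?case using M graded_carrier[OF graded_add.hyps(1)] graded_carrier[OF graded_add.hyps(2)]
    by (simp add: square_mat_distribs[where n=n] mat_trace_add[where n=n])
next
  case (graded_diff d X Y)
  then show ?case using M graded_carrier[OF graded_diff.hyps(1)] graded_carrier[OF graded_diff.hyps(2)]
    by (simp add: square_mat_distribs[where n=n] mat_trace_diff[where n=n])
next
  case (graded_smult d X c)
  then show ?case using M graded_carrier[OF graded_smult.hyps]
    by (simp add: square_mat_distribs[where n=n] mat_trace_smult[where n=n])
next
  case (graded_mcomm i X j Y)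
  note X = graded_carrier[OF graded_mcomm.hyps(1)] and Y = graded_carrier[OF graded_mcomm.hyps(2)]
  have "mat_trace (M * mcomm X Y) = mat_trace (M * X * Y) - mat_trace (M * Y * X)"
    using M X Y by (simp add: mcomm_def square_mat_distribs[where n=n] mat_trace_diff[where n=n])
  also have "mat_trace (M * X * Y) = mat_trace (X * (M * Y))"
    using M_comm[OF graded_mcomm.hyps(1)] M X Y by simp
  also have "\<dots> = mat_trace (M * Y * X)"
    using mat_trace_mult_comm[of X n n "M * Y"] M X Y by simp
  finally show ?case by simp
qed auto

end

locale irreducible_jordan_gen_rep = jordan_gen_rep sA m e n \<pi> a
  for sA :: "'k::field_char_0 \<Rightarrow> 'a::ab_group_add \<Rightarrow> 'a" and m e n \<pi> a +
  assumes irreducible: "irreducible_family n (insert a (range \<pi>))"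
begin

lemma n_pos: "n > 0"
  using irreducible unfolding irreducible_family_def by blast

text \<open>A degree-\<open>0\<close> element central in the generated algebra vanishes: by Schur's lemma it is
  either zero or invertible, and an invertible one \<open>W\<close> would give
  \<open>n = tr (W\<^sup>-\<^sup>1 W) = 0\<close>, as \<open>W\<^sup>-\<^sup>1\<close> is central too.\<close>

lemma graded_0_central_eq_0:
  assumes W: "graded 0 W" and W_pi: "\<And>x. mcomm W (\<pi> x) = 0\<^sub>m n n" and W_a: "mcomm W a = 0\<^sub>m n n"
  shows "W = 0\<^sub>m n n"
proof -
  note W_carrier = graded_carrier[OF W]
  have W_comm: "W * M = M * W" if "M \<in> insert a (range \<pi>)" for M
    using that W_pi W_a W_carrier by (auto simp: mcomm_eq_0_iff_commute)
  have "W = 0\<^sub>m n n \<or> (\<exists>B \<in> carrier_mat n n. B * W = 1\<^sub>m n \<and> W * B = 1\<^sub>m n)"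
    by (rule commuting_mat_zero_or_invertible[OF irreducible W_carrier _ W_comm]) auto
  moreover have False if B: "B \<in> carrier_mat n n" "B * W = 1\<^sub>m n" "W * B = 1\<^sub>m n" for B
  proof -
    have B_comm: "B * M = M * B" if "M \<in> insert a (range \<pi>)" for M
    proof -
      have M: "M \<in> carrier_mat n n" using that by auto
      have "B * M = B * ((M * W) * B)" using B M W_carrier by simp
      also have "\<dots> = B * ((W * M) * B)" by (simp only: W_comm[OF that])
      also have "\<dots> = (B * W) * (M * B)"
        using B(1) M W_carrier by (simp add: assoc_mult_mat[of B n n W n "M * B" n])
      also have "\<dots> = M * B" using B M by (simp add: left_mult_one_mat[of "M * B" n n])
      finally show ?thesis .
    qed
    have "mat_trace (B * W) = 0"
      by (rule graded_0_trace[OF B(1) graded_commute[OF B(1)] W refl]) (use B_comm in auto)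
    then show False using B(2) n_pos by (simp add: mat_trace_one)
  qed
  ultimately show ?thesis by blast
qed

lemma represents0_unique:
  assumes Z: "represents0 Z S" and Z': "represents0 Z' S"
  shows "Z = Z'"
proof -
  have W: "graded 0 (Z - Z')"
    using Z Z' unfolding represents0_def by (blast intro: graded_diff)
  note carriers = represents0_carrier[OF Z] represents0_carrier[OF Z']
  have W_pi: "mcomm (Z - Z') (\<pi> u) = 0\<^sub>m n n" for u
    using Z Z' carriers unfolding represents0_def by (simp add: mcomm_linear)
  then have pi_e_W: "mcomm (\<pi> e) (Z - Z') = 0\<^sub>m n n"
    using mcomm_antisym[OF graded_carrier[OF W] pi_carrier[of e]] by simp
  have "mcomm (\<pi> e) (mcomm (Z - Z') a) = mcomm (mcomm (\<pi> e) (Z - Z')) a + mcomm (Z - Z') h"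
    unfolding h_def by (rule mcomm_jacobi[where n=n]) (use carriers in simp_all)
  then have "mcomm (\<pi> e) (mcomm (Z - Z') a) = 0\<^sub>m n n"
    using pi_e_W graded_0_mcomm_h[OF W] by simp
  moreover have "graded (-1) (mcomm (Z - Z') a)"
    by (rule graded_mcomm'[OF W graded_a]) simp
  ultimately have "mcomm (Z - Z') a = 0\<^sub>m n n"
    using graded_negative_eq_0 by simp
  then have "Z - Z' = 0\<^sub>m n n"
    by (rule graded_0_central_eq_0[OF W W_pi])
  then show ?thesis
    using carriers by (simp add: mat_eq_iff_entries_eq[of _ n])
qed

lemma represents1_unique:
  assumes Q: "represents1 Q B" and Q': "represents1 Q' B"
  shows "Q = Q'"
proof -
  have W: "graded (-1) (Q - Q')"
    using Q Q' unfolding represents1_def by (blast intro: graded_diff)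
  note carriers = represents1_carrier[OF Q] represents1_carrier[OF Q']
  have "mcomm Q (\<pi> e) = mcomm Q' (\<pi> e)"
    using Q Q' unfolding represents1_def by (blast intro: represents0_unique)
  then have "mcomm (Q - Q') (\<pi> e) = 0\<^sub>m n n"
    using carriers by (simp add: mcomm_linear)
  then have "mcomm (\<pi> e) (Q - Q') = 0\<^sub>m n n"
    using mcomm_antisym[OF graded_carrier[OF W] pi_carrier[of e]] by simp
  then have "Q - Q' = 0\<^sub>m n n"
    by (rule graded_negative_eq_0[OF W, rotated]) simp
  then show ?thesis
    using carriers by (simp add: mat_eq_iff_entries_eq[of _ n])
qed

text \<open>Off \<open>U\<^sub>0\<close> and \<open>U\<^sub>1\<close> the descriptions in \<open>rho0\<close> and \<open>rho1\<close> are junk, which is harmless since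
  \<open>rho\<close> is only ever applied to elements of \<open>L(A)\<close>.\<close>

definition rho0 :: "('a \<Rightarrow> 'a) \<Rightarrow> 'k mat" where "rho0 S = (THE Z. represents0 Z S)"

definition rho1 :: "('a \<Rightarrow> 'a \<Rightarrow> 'a) \<Rightarrow> 'k mat" where "rho1 B = (THE Q. represents1 Q B)"

definition rho :: "'a LAel \<Rightarrow> 'k mat" where
  "rho X = (case X of (u, S, B) \<Rightarrow> \<pi> u + rho0 S + rho1 B)"

lemma rho0_eq: "represents0 Z S \<Longrightarrow> rho0 S = Z"
  unfolding rho0_def using represents0_unique by blast

lemma rho1_eq: "represents1 Q B \<Longrightarrow> rho1 B = Q"
  unfolding rho1_def using represents1_unique by blast

lemma LA_rho_cases:
  assumes "X \<in> LA sA m"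
  obtains u S B Z Q where "X = (u, S, B)" "represents0 Z S" "represents1 Q B" "U1_image Q"
    "rho X = \<pi> u + Z + Q"
proof -
  obtain u S B where X: "X = (u, S, B)" "S \<in> U0 sA m" "B \<in> U1 sA m"
    using assms unfolding LA_def by auto
  obtain Z where Z: "represents0 Z S" using exists_represents0[OF X(2)] by blast
  obtain Q where Q: "represents1 Q B" "U1_image Q" using exists_represents1[OF X(3)] by blast
  show ?thesis
    using that[OF X(1) Z Q] by (simp add: X(1) rho_def rho0_eq[OF Z] rho1_eq[OF Q(1)])
qed

lemma rho_carrier: "X \<in> LA sA m \<Longrightarrow> rho X \<in> carrier_mat n n"
  by (erule LA_rho_cases) (auto dest: represents0_carrier represents1_carrier)

lemma rho_add:
  assumes X: "X \<in> LA sA m" and Y: "Y \<in> LA sA m"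
  shows "rho (la_add X Y) = rho X + rho Y"
proof -
  obtain u1 S1 B1 Z1 Q1 where x: "X = (u1, S1, B1)" "represents0 Z1 S1" "represents1 Q1 B1"
    "rho X = \<pi> u1 + Z1 + Q1"
    using LA_rho_cases[OF X] by metis
  obtain u2 S2 B2 Z2 Q2 where y: "Y = (u2, S2, B2)" "represents0 Z2 S2" "represents1 Q2 B2"
    "rho Y = \<pi> u2 + Z2 + Q2"
    using LA_rho_cases[OF Y] by metis
  have "rho (la_add X Y) = \<pi> (u1 + u2) + (Z1 + Z2) + (Q1 + Q2)"
    unfolding x(1) y(1) la_add_def
    using rho0_eq[OF represents0_add[OF x(2) y(2)]] rho1_eq[OF represents1_add[OF x(3) y(3)]]
    by (simp add: rho_def)
  then show ?thesis
    using x y represents0_carrier represents1_carrier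
    by (simp add: pi_add mat_eq_iff_entries_eq[of _ n] algebra_simps)
qed

lemma rho_scale:
  assumes X: "X \<in> LA sA m"
  shows "rho (la_scale sA c X) = c \<cdot>\<^sub>m rho X"
proof -
  obtain u S B Z Q where x: "X = (u, S, B)" "represents0 Z S" "represents1 Q B" "rho X = \<pi> u + Z + Q"
    using LA_rho_cases[OF X] by metis
  have "rho (la_scale sA c X) = \<pi> (sA c u) + c \<cdot>\<^sub>m Z + c \<cdot>\<^sub>m Q"
    unfolding x(1) la_scale_def
    using rho0_eq[OF represents0_scale[OF x(2)]] rho1_eq[OF represents1_scale[OF x(3)]]
    by (simp add: rho_def)
  then show ?thesis
    using x represents0_carrier represents1_carrier
    by (simp add: pi_scale mat_eq_iff_entries_eq[of _ n] fun_eq_iff algebra_simps)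
qed

lemma rho_bracket:
  assumes X: "X \<in> LA sA m" and Y: "Y \<in> LA sA m"
  shows "rho (la_bracket X Y) = mcomm (rho X) (rho Y)"
proof -
  obtain u1 S1 B1 Z1 Q1 where x: "X = (u1, S1, B1)" "represents0 Z1 S1" "represents1 Q1 B1"
    "U1_image Q1" "rho X = \<pi> u1 + Z1 + Q1"
    using LA_rho_cases[OF X] by metis
  obtain u2 S2 B2 Z2 Q2 where y: "Y = (u2, S2, B2)" "represents0 Z2 S2" "represents1 Q2 B2"
    "U1_image Q2" "rho Y = \<pi> u2 + Z2 + Q2"
    using LA_rho_cases[OF Y] by metis
  have c: "Z1 \<in> carrier_mat n n" "Z2 \<in> carrier_mat n n" "Q1 \<in> carrier_mat n n" "Q2 \<in> carrier_mat n n"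
    using x y by (auto dest: represents0_carrier represents1_carrier)
  have Q1_pi: "represents0 (mcomm Q1 (\<pi> u2)) (B1 u2)" and Q2_pi: "represents0 (mcomm Q2 (\<pi> u1)) (B2 u1)"
    using x(3) y(3) unfolding represents1_def by blast+
  have U0_part: "represents0 (mcomm Z1 Z2 + mcomm Q1 (\<pi> u2) - mcomm Q2 (\<pi> u1))
      (\<lambda>y. S1 (S2 y) - S2 (S1 y) + B1 u2 y - B2 u1 y)"
    by (rule represents0_diff[OF represents0_add[OF represents0_mcomm[OF x(2) y(2)] Q1_pi] Q2_pi])
  have U1_part: "represents1 (mcomm Z1 Q2 - mcomm Z2 Q1)
      (\<lambda>x y. (S1 (B2 x y) - B2 (S1 x) y - B2 x (S1 y)) - (S2 (B1 x y) - B1 (S2 x) y - B1 x (S2 y)))"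
    using represents1_diff[OF represents1_mcomm[OF x(2) y(3)] represents1_mcomm[OF y(2) x(3)]]
    by (simp add: algebra_simps)
  \<comment> \<open>Expanding \<open>[\<pi> u1 + Z1 + Q1, \<pi> u2 + Z2 + Q2]\<close>, the terms \<open>[\<pi> u1, \<pi> u2]\<close> and \<open>[Q1, Q2]\<close>
    vanish, and the rest regroups by degree.\<close>
  have "rho (la_bracket X Y) = (mcomm Z1 (\<pi> u2) - mcomm Z2 (\<pi> u1))
      + (mcomm Z1 Z2 + mcomm Q1 (\<pi> u2) - mcomm Q2 (\<pi> u1)) + (mcomm Z1 Q2 - mcomm Z2 Q1)"
    unfolding x(1) y(1) la_bracket_def rho_def
    using rho0_eq[OF U0_part] rho1_eq[OF U1_part] x(2) y(2)
    by (simp add: pi_diff represents0_def)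
  also have "\<dots> = mcomm (rho X) (rho Y)"
    unfolding x(5) y(5) using c pi_commute[of u1 u2] U1_image_commute[OF x(4) y(4)]
      mcomm_antisym[OF c(2) pi_carrier[of u1]] mcomm_antisym[OF c(4) pi_carrier[of u1]]
      mcomm_antisym[OF c(2) c(3)]
    by (simp add: mcomm_linear mat_eq_iff_entries_eq[of _ n] fun_eq_iff algebra_simps)
  finally show ?thesis .
qed

lemma lie_rep_rho: "lie_rep sA m n rho"
  unfolding lie_rep_def using rho_carrier rho_add rho_scale rho_bracket by (simp add: mcomm_def)

lemma rho_Um1: "rho (el_Um1 x) = \<pi> x"
  using rho0_eq[OF represents0_zero] rho1_eq[OF represents1_zero] by (simp add: rho_def)

lemma rho_Abar: "rho (el_U1 (Abar m)) = - a"
  using rho0_eq[OF represents0_zero] rho1_eq[OF represents1_Abar] by (simp add: rho_def)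

lemma irreducible_rho: "irreducible_family n (rho ` LA sA m)"
proof (rule irreducible_family_transfer[OF irreducible])
  fix W assume W: "subspace_vec n W" and inv: "\<forall>M\<in>rho ` LA sA m. \<forall>w\<in>W. M *\<^sub>v w \<in> W"
  have "\<forall>w\<in>W. rho (el_U1 (Abar m)) *\<^sub>v w \<in> W"
    using inv el_Abar_in_LA by blast
  then have "\<forall>w\<in>W. (- rho (el_U1 (Abar m))) *\<^sub>v w \<in> W"
    by (rule invariant_uminus[OF W rho_carrier[OF el_Abar_in_LA]])
  moreover have "\<forall>w\<in>W. \<pi> x *\<^sub>v w \<in> W" for x
    using inv el_Um1_in_LA by (auto simp flip: rho_Um1)
  ultimately show "\<forall>M\<in>insert a (range \<pi>). \<forall>w\<in>W. M *\<^sub>v w \<in> W"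
    by (auto simp: rho_Abar)
qed

lemma exists_irreducible_lie_rep_Phi_equiv:
  "\<exists>\<rho>. irreducible_lie_rep sA m n \<rho> \<and> gen_rep_equiv n (Phi_pi m \<rho>) (Phi_a m \<rho>) n \<pi> a"
proof (intro exI conjI)
  show "irreducible_lie_rep sA m n rho"
    unfolding irreducible_lie_rep_def using lie_rep_rho irreducible_rho by blast
  have "Phi_pi m rho = \<pi>" "Phi_a m rho = a"
    by (simp_all add: Phi_pi_def Phi_a_def rho_Um1 rho_Abar fun_eq_iff)
  moreover have "invertible_mat (1\<^sub>m n :: 'k mat)"
    by (auto simp: invertible_mat_def inverts_mat_def intro!: exI[of _ "1\<^sub>m n"])
  ultimately show "gen_rep_equiv n (Phi_pi m rho) (Phi_a m rho) n \<pi> a"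
    unfolding gen_rep_equiv_def
    by (intro conjI bexI[of _ "1\<^sub>m n"])
      (auto simp: left_mult_one_mat[OF pi_carrier] right_mult_one_mat[OF pi_carrier]
        left_mult_one_mat[OF a_carrier] right_mult_one_mat[OF a_carrier])
qed

end

theorem theorem3:
  fixes sA :: "'k::field_char_0 \<Rightarrow> 'a::ab_group_add \<Rightarrow> 'a"
    and m :: "'a \<Rightarrow> 'a \<Rightarrow> 'a" and e :: 'a
  assumes "jordan_algebra_with_unit sA m e"
  shows "(\<forall>n \<rho>. irreducible_lie_rep sA m n \<rho> \<longrightarrow>
            irreducible_gen_rep sA m e n (Phi_pi m \<rho>) (Phi_a m \<rho>))
       \<and> (\<forall>n \<rho> n' \<rho>'. irreducible_lie_rep sA m n \<rho> \<and> irreducible_lie_rep sA m n' \<rho>' \<longrightarrow>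
            (lie_rep_equiv sA m n \<rho> n' \<rho>' \<longleftrightarrow>
             gen_rep_equiv n (Phi_pi m \<rho>) (Phi_a m \<rho>) n' (Phi_pi m \<rho>') (Phi_a m \<rho>')))
       \<and> (\<forall>n \<pi> a. irreducible_gen_rep sA m e n \<pi> a \<longrightarrow>
            (\<exists>\<rho>. irreducible_lie_rep sA m n \<rho> \<and>
                 gen_rep_equiv n (Phi_pi m \<rho>) (Phi_a m \<rho>) n \<pi> a))"
proof -
  interpret unital_jordan_algebra sA m e
    by (rule unital_jordan_algebra.intro) (fact assms)
  have "irreducible_gen_rep sA m e n (Phi_pi m \<rho>) (Phi_a m \<rho>)"
    if "irreducible_lie_rep sA m n \<rho>" for n \<rho>
    using that by (rule irreducible_gen_rep_Phi)
  moreover have "lie_rep_equiv sA m n \<rho> n' \<rho>' \<longleftrightarrow>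
      gen_rep_equiv n (Phi_pi m \<rho>) (Phi_a m \<rho>) n' (Phi_pi m \<rho>') (Phi_a m \<rho>')"
    if "irreducible_lie_rep sA m n \<rho>" "irreducible_lie_rep sA m n' \<rho>'" for n \<rho> n' \<rho>'
    using that by (intro lie_rep_equiv_iff_gen_rep_equiv_Phi) (simp_all add: irreducible_lie_rep_def)
  moreover have "\<exists>\<rho>. irreducible_lie_rep sA m n \<rho> \<and> gen_rep_equiv n (Phi_pi m \<rho>) (Phi_a m \<rho>) n \<pi> a"
    if "irreducible_gen_rep sA m e n \<pi> a" for n \<pi> a
  proof -
    interpret irreducible_jordan_gen_rep sA m e n \<pi> a
      using assms that by unfold_locales (simp_all add: irreducible_gen_rep_def)
    show ?thesis by (rule exists_irreducible_lie_rep_Phi_equiv)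
  qed
  ultimately show ?thesis by blast
qed

end
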